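(* Let $n\geqslant 4$ be an integer and let $0<\eta,\vartheta\leqslant 1$. Let $\boldsymbol{X}=\langle X_s:s\in\binom{[n]}{2}\rangle$ be a $\{0,1\}$-valued, $\eta$-spreadable, two-dimensional random array on $[n]$ such that for every $i,j,k,\ell\in[n]$ with $i<j<k<\ell$, \[ \mathbb{E}[X_{\{i,k\}}X_{\{i,\ell\}}X_{\{j,k\}}X_{\{j,\ell\}}]\leqslant \mathbb{E}[X_{\{i,k\}}]\,\mathbb{E}[X_{\{i,\ell\}}]\,\mathbb{E}[X_{\{j,k\}}]\,\mathbb{E}[X_{\{j,\ell\}}]+\vartheta. \] Then for every nonempty $\mathcal{F}\subseteq\binom{[n]}{2}$ such that $\bigcup\mathcal{F}$ has cardinality at most $n/2$ we have \[ \Big|\mathbb{E}\Big[\prod_{s\in\mathcal{F}}X_s\Big]-\prod_{s\in\mathcal{F}}\mathbb{E}[X_s]\Big|\leqslant 400\,|\mathcal{F}|\,\big(n^{-1/16}+\eta^{1/16}+\vartheta^{1/16}\big). \]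
   Context: $[n]=\{1,\dots,n\}$ and $\binom{I}{d}$ denotes the set of $d$-element subsets of $I$. A two-dimensional random array on $[n]$ is a stochastic process $\boldsymbol{X}=\langle X_s:s\in\binom{[n]}{2}\rangle$; for $J\subseteq[n]$ with $|J|\geqslant2$, $\boldsymbol{X}_J=\langle X_s:s\in\binom{J}{2}\rangle$. For $\eta\geqslant 0$, $\boldsymbol{X}$ is $\eta$-spreadable if for every $J,K\subseteq[n]$ with $|J|=|K|\geqslant 2$ the total variation distance between the laws of $\boldsymbol{X}_J$ and $\boldsymbol{X}_K$ (identified via the increasing bijection $J\to K$) is at most $\eta$. *)

theory Defs
  imports "HOL-Probability.Probability"
begin

definition pairs :: "nat set \<Rightarrow> nat set set" where
  "pairs I = {s. s \<subseteq> I \<and> card s = 2}"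

definition enum :: "nat set \<Rightarrow> nat \<Rightarrow> nat" where
  "enum J i = sorted_list_of_set J ! (i - 1)"

text \<open>The subarray X_J, transported to the index set [card J] via the increasing
  bijection [card J] -> J (coordinates outside pairs [card J] are set to 0).\<close>
definition subarray :: "(nat set \<Rightarrow> 'a \<Rightarrow> real) \<Rightarrow> nat set \<Rightarrow> 'a \<Rightarrow> (nat set \<Rightarrow> real)" where
  "subarray X J \<omega> = (\<lambda>s. if s \<in> pairs {1..card J} then X (enum J ` s) \<omega> else 0)"

text \<open>eta-spreadability: total variation distance between the laws of X_J and X_K
  (identified via the increasing bijection) is at most eta, i.e. for every event A
  of the (finite) value space the probabilities differ by at most eta.\<close>
definition spreadable :: "'a measure \<Rightarrow> nat \<Rightarrow> real \<Rightarrow> (nat set \<Rightarrow> 'a \<Rightarrow> real) \<Rightarrow> bool" where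
  "spreadable M n \<eta> X \<longleftrightarrow>
     (\<forall>J K. J \<subseteq> {1..n} \<longrightarrow> K \<subseteq> {1..n} \<longrightarrow> card J = card K \<longrightarrow> 2 \<le> card J \<longrightarrow>
       (\<forall>A. \<bar>measure M {\<omega> \<in> space M. subarray X J \<omega> \<in> A}
             - measure M {\<omega> \<in> space M. subarray X K \<omega> \<in> A}\<bar> \<le> \<eta>))"

end

theory Submission
  imports Defs
begin

(*
  Let p = E X_{1,2}; by spreadability every E X_s is within eta of p.  The heart of the proof is
  that removing one edge e = {a, b} from a graph G changes E[prod_G X] into about
  p * E[prod_(G - e) X]; telescoping over the edges of F then gives E[prod_F X] ~ p^|F|, and
  likewise prod_F E X_s ~ p^|F|.

  For the edge removal, blow up the vertices of G into blocks of length N ~ n / |V(G)| and move a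
  and b inside their blocks by i and j.  Spreadability makes each of these N^2 increasing copies of
  G behave like G itself, and averaging over them turns the defect into E[sum_i Y_i sum_j W_j
  (x_ij - p)], where x_ij is the edge between the i-th copy of a and the j-th copy of b and the
  weights Y_i, W_j lie in [0, 1].  Two Cauchy-Schwarz steps bound the fourth power of this by N^4
  times the second moment of the centred codegrees of the N x N matrix (x_ij), and that moment is
  small because the box condition bounds its 4-cycle densities by p^4 + theta + 15 eta.
*)

section \<open>Bounded random variables\<close>

definition bounded_rv :: "'a measure \<Rightarrow> ('a \<Rightarrow> real) \<Rightarrow> bool" where
  "bounded_rv M f \<longleftrightarrow> f \<in> borel_measurable M \<and> (\<exists>B. \<forall>\<omega>\<in>space M. \<bar>f \<omega>\<bar> \<le> B)"

lemma bounded_rvI: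
  "f \<in> borel_measurable M \<Longrightarrow> (\<And>\<omega>. \<omega> \<in> space M \<Longrightarrow> \<bar>f \<omega>\<bar> \<le> B) \<Longrightarrow> bounded_rv M f"
  unfolding bounded_rv_def by blast

lemma (in finite_measure) integrable_bounded_rv [simp]: "bounded_rv M f \<Longrightarrow> integrable M f"
  unfolding bounded_rv_def by (auto intro!: integrable_const_bound AE_I2)

lemma bounded_rv_const [simp]: "bounded_rv M (\<lambda>\<omega>. c)"
  by (rule bounded_rvI[where B = "\<bar>c\<bar>"]) auto

lemma bounded_rv_add [simp]:
  assumes "bounded_rv M f" "bounded_rv M g"
  shows "bounded_rv M (\<lambda>\<omega>. f \<omega> + g \<omega>)"
proof -
  obtain B C where f: "f \<in> borel_measurable M" "\<forall>\<omega>\<in>space M. \<bar>f \<omega>\<bar> \<le> B"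
    and g: "g \<in> borel_measurable M" "\<forall>\<omega>\<in>space M. \<bar>g \<omega>\<bar> \<le> C"
    using assms unfolding bounded_rv_def by blast
  show ?thesis
    by (rule bounded_rvI[where B = "B + C"])
      (use f g in \<open>auto intro!: borel_measurable_add intro: order.trans[OF abs_triangle_ineq] add_mono\<close>)
qed

lemma bounded_rv_mult [simp]:
  assumes "bounded_rv M f" "bounded_rv M g"
  shows "bounded_rv M (\<lambda>\<omega>. f \<omega> * g \<omega>)"
proof -
  obtain B C where f: "f \<in> borel_measurable M" "\<forall>\<omega>\<in>space M. \<bar>f \<omega>\<bar> \<le> B"
    and g: "g \<in> borel_measurable M" "\<forall>\<omega>\<in>space M. \<bar>g \<omega>\<bar> \<le> C"
    using assms unfolding bounded_rv_def by blast
  show ?thesis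
    by (rule bounded_rvI[where B = "B * C"])
      (use f g in \<open>auto simp: abs_mult intro!: borel_measurable_times mult_mono\<close>)
qed

lemma bounded_rv_diff [simp]:
  "bounded_rv M f \<Longrightarrow> bounded_rv M g \<Longrightarrow> bounded_rv M (\<lambda>\<omega>. f \<omega> - g \<omega>)"
  using bounded_rv_add[of M f "\<lambda>\<omega>. (- 1) * g \<omega>"] bounded_rv_mult[of M "\<lambda>_. - 1" g] by simp

(* The =simp=> premises let the simplifier discharge the side conditions, as in integral_sum'. *)
lemma bounded_rv_sum [simp]:
  "(\<And>i. i \<in> I =simp=> bounded_rv M (f i)) \<Longrightarrow> bounded_rv M (\<lambda>\<omega>. \<Sum>i\<in>I. f i \<omega>)"
  unfolding simp_implies_def by (induction I rule: infinite_finite_induct) auto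

lemma bounded_rv_prod [simp]:
  "(\<And>i. i \<in> I =simp=> bounded_rv M (f i)) \<Longrightarrow> bounded_rv M (\<lambda>\<omega>. \<Prod>i\<in>I. f i \<omega>)"
  unfolding simp_implies_def by (induction I rule: infinite_finite_induct) auto

lemma bounded_rv_power [simp]: "bounded_rv M f \<Longrightarrow> bounded_rv M (\<lambda>\<omega>. f \<omega> ^ k)"
  by (induction k) auto

lemma (in prob_space) square_expectation_le:
  "bounded_rv M f \<Longrightarrow> (expectation f)\<^sup>2 \<le> expectation (\<lambda>\<omega>. (f \<omega>)\<^sup>2)"
  using variance_eq[of f] variance_positive[of f] by simp

lemma (in prob_space) fourth_power_expectation_le:
  assumes "bounded_rv M f"
  shows "(expectation f) ^ 4 \<le> expectation (\<lambda>\<omega>. f \<omega> ^ 4)"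
proof -
  have "(expectation f) ^ 4 = ((expectation f)\<^sup>2)\<^sup>2" by simp
  also have "\<dots> \<le> (expectation (\<lambda>\<omega>. (f \<omega>)\<^sup>2))\<^sup>2"
    using square_expectation_le[OF assms] by (intro power_mono) auto
  also have "\<dots> \<le> expectation (\<lambda>\<omega>. ((f \<omega>)\<^sup>2)\<^sup>2)"
    using assms by (intro square_expectation_le) simp
  finally show ?thesis by simp
qed

lemma (in prob_space) expectation_prod_binary:
  assumes "finite I" and binary: "\<And>i \<omega>. i \<in> I \<Longrightarrow> \<omega> \<in> space M \<Longrightarrow> f i \<omega> \<in> {0, 1}"
  shows "expectation (\<lambda>\<omega>. \<Prod>i\<in>I. f i \<omega>) = prob {\<omega> \<in> space M. \<forall>i\<in>I. f i \<omega> = 1}"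
proof -
  let ?A = "{\<omega> \<in> space M. \<forall>i\<in>I. f i \<omega> = 1}"
  have "(\<Prod>i\<in>I. f i \<omega>) = indicator ?A \<omega>" if \<omega>: "\<omega> \<in> space M" for \<omega>
  proof (cases "\<forall>i\<in>I. f i \<omega> = 1")
    case False
    then obtain i where "i \<in> I" "f i \<omega> = 0" using binary \<omega> by fastforce
    then show ?thesis using False \<open>finite I\<close> by (auto intro: prod_zero)
  qed (use \<omega> in auto)
  then have "expectation (\<lambda>\<omega>. \<Prod>i\<in>I. f i \<omega>) = expectation (indicator ?A)"
    by (intro Bochner_Integration.integral_cong) auto
  then show ?thesis by (simp add: Int_absorb2)
qed

section \<open>Inequalities for finite sums\<close>

lemma double_sum_squared_le:
  fixes a :: "'i \<Rightarrow> 'i \<Rightarrow> real"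
  shows "(\<Sum>i\<in>A. \<Sum>j\<in>A. a i j)\<^sup>2 \<le> real (card A) ^ 2 * (\<Sum>i\<in>A. \<Sum>j\<in>A. (a i j)\<^sup>2)"
proof -
  have "(\<Sum>i\<in>A. \<Sum>j\<in>A. a i j)\<^sup>2 \<le> real (card A) * (\<Sum>i\<in>A. (\<Sum>j\<in>A. a i j)\<^sup>2)"
    using sum_squared_le_sum_of_squares by (simp add: mult.commute)
  also have "\<dots> \<le> real (card A) * (\<Sum>i\<in>A. real (card A) * (\<Sum>j\<in>A. (a i j)\<^sup>2))"
    using sum_squared_le_sum_of_squares
    by (intro mult_left_mono sum_mono) (auto simp: mult.commute)
  finally show ?thesis by (simp add: power2_eq_square sum_distrib_left mult.assoc)
qed

lemma sum_rotate3:
  "(\<Sum>a\<in>A. \<Sum>b\<in>B. \<Sum>c\<in>C. F a b c) = (\<Sum>b\<in>B. \<Sum>c\<in>C. \<Sum>a\<in>A. F a b c)"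
  by (rule trans[OF sum.swap], rule sum.cong[OF refl], rule sum.swap)

lemma sum_swap_pairs:
  "(\<Sum>a\<in>A. \<Sum>b\<in>B. \<Sum>c\<in>C. \<Sum>d\<in>D. F a b c d) = (\<Sum>c\<in>C. \<Sum>d\<in>D. \<Sum>a\<in>A. \<Sum>b\<in>B. F a b c d)"
  by (rule trans[OF sum.cong[OF refl sum_rotate3]], rule sum_rotate3)

lemma weighted_sum_squared_le:
  fixes y h :: "'i \<Rightarrow> real"
  assumes "\<And>i. i \<in> A \<Longrightarrow> \<bar>y i\<bar> \<le> 1"
  shows "(\<Sum>i\<in>A. y i * h i)\<^sup>2 \<le> real (card A) * (\<Sum>i\<in>A. (h i)\<^sup>2)"
proof -
  have "\<bar>\<Sum>i\<in>A. y i * h i\<bar> \<le> (\<Sum>i\<in>A. \<bar>y i * h i\<bar>)"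
    by (rule sum_abs)
  also have "\<dots> \<le> (\<Sum>i\<in>A. \<bar>h i\<bar>)"
    using assms by (intro sum_mono) (simp add: abs_mult mult_left_le_one_le)
  finally have "(\<Sum>i\<in>A. y i * h i)\<^sup>2 \<le> (\<Sum>i\<in>A. \<bar>h i\<bar>)\<^sup>2"
    by (metis abs_ge_zero power2_abs power_mono)
  also have "\<dots> \<le> real (card A) * (\<Sum>i\<in>A. (h i)\<^sup>2)"
    using sum_squared_le_sum_of_squares[of "\<lambda>i. \<bar>h i\<bar>" A] by (simp add: mult.commute)
  finally show ?thesis .
qed

lemma sum_weighted_rows_squared_le:
  fixes w :: "'i \<Rightarrow> real" and a :: "'i \<Rightarrow> 'i \<Rightarrow> real"
  assumes "\<And>j. j \<in> A \<Longrightarrow> \<bar>w j\<bar> \<le> 1"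
  shows "(\<Sum>i\<in>A. (\<Sum>j\<in>A. w j * a i j)\<^sup>2)\<^sup>2
    \<le> real (card A) ^ 2 * (\<Sum>j\<in>A. \<Sum>j'\<in>A. (\<Sum>i\<in>A. a i j * a i j')\<^sup>2)"
proof -
  define c where "c j j' = (\<Sum>i\<in>A. a i j * a i j')" for j j'
  have "(\<Sum>i\<in>A. (\<Sum>j\<in>A. w j * a i j)\<^sup>2) = (\<Sum>i\<in>A. \<Sum>j\<in>A. \<Sum>j'\<in>A. w j * w j' * (a i j * a i j'))"
    unfolding power2_eq_square sum_product by (simp add: mult_ac)
  also have "\<dots> = (\<Sum>j\<in>A. \<Sum>j'\<in>A. \<Sum>i\<in>A. w j * w j' * (a i j * a i j'))"
    by (rule sum_rotate3)
  also have "\<dots> = (\<Sum>j\<in>A. \<Sum>j'\<in>A. w j * w j' * c j j')"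
    by (simp only: c_def sum_distrib_left)
  also have "\<dots> \<le> (\<Sum>j\<in>A. \<Sum>j'\<in>A. \<bar>c j j'\<bar>)"
  proof (intro sum_mono)
    fix j j' assume "j \<in> A" "j' \<in> A"
    then have "\<bar>w j * w j'\<bar> \<le> 1"
      using assms by (simp add: abs_mult mult_le_one)
    then show "w j * w j' * c j j' \<le> \<bar>c j j'\<bar>"
      by (metis abs_ge_self abs_ge_zero abs_mult mult_left_le_one_le order.trans)
  qed
  finally have "(\<Sum>i\<in>A. (\<Sum>j\<in>A. w j * a i j)\<^sup>2)\<^sup>2 \<le> (\<Sum>j\<in>A. \<Sum>j'\<in>A. \<bar>c j j'\<bar>)\<^sup>2"
    by (intro power_mono) (auto intro: sum_nonneg)
  also have "\<dots> \<le> real (card A) ^ 2 * (\<Sum>j\<in>A. \<Sum>j'\<in>A. (c j j')\<^sup>2)"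
    using double_sum_squared_le[of "\<lambda>j j'. \<bar>c j j'\<bar>" A] by simp
  finally show ?thesis
    unfolding c_def .
qed

lemma weighted_sum_fourth_power_le:
  fixes y w :: "'i \<Rightarrow> real" and a :: "'i \<Rightarrow> 'i \<Rightarrow> real"
  assumes "\<And>i. i \<in> A \<Longrightarrow> \<bar>y i\<bar> \<le> 1" and "\<And>j. j \<in> A \<Longrightarrow> \<bar>w j\<bar> \<le> 1"
  shows "(\<Sum>i\<in>A. y i * (\<Sum>j\<in>A. w j * a i j)) ^ 4
    \<le> real (card A) ^ 4 * (\<Sum>j\<in>A. \<Sum>j'\<in>A. (\<Sum>i\<in>A. a i j * a i j')\<^sup>2)"
proof -
  have "(\<Sum>i\<in>A. y i * (\<Sum>j\<in>A. w j * a i j)) ^ 4 = ((\<Sum>i\<in>A. y i * (\<Sum>j\<in>A. w j * a i j))\<^sup>2)\<^sup>2"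
    by simp
  also have "\<dots> \<le> (real (card A) * (\<Sum>i\<in>A. (\<Sum>j\<in>A. w j * a i j)\<^sup>2))\<^sup>2"
    using weighted_sum_squared_le[OF assms(1)] by (intro power_mono) auto
  also have "\<dots> = real (card A) ^ 2 * (\<Sum>i\<in>A. (\<Sum>j\<in>A. w j * a i j)\<^sup>2)\<^sup>2"
    by (simp add: power_mult_distrib)
  also have "\<dots> \<le> real (card A) ^ 2 * (real (card A) ^ 2 * (\<Sum>j\<in>A. \<Sum>j'\<in>A. (\<Sum>i\<in>A. a i j * a i j')\<^sup>2))"
    using assms(2) by (intro mult_left_mono sum_weighted_rows_squared_le) auto
  finally show ?thesis
    by (simp add: mult.assoc flip: power_add)
qed

lemma dist_double_average_le:
  fixes t :: "nat \<Rightarrow> nat \<Rightarrow> real"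
  assumes "0 < N" and close: "\<And>i j. i < N \<Longrightarrow> j < N \<Longrightarrow> \<bar>d - t i j\<bar> \<le> \<epsilon>"
  shows "\<bar>d - (\<Sum>i<N. \<Sum>j<N. t i j) / real N ^ 2\<bar> \<le> \<epsilon>"
proof -
  have "d - (\<Sum>i<N. \<Sum>j<N. t i j) / real N ^ 2 = (\<Sum>i<N. \<Sum>j<N. d - t i j) / real N ^ 2"
    using assms(1) by (simp add: sum_subtractf field_simps power2_eq_square)
  also have "\<bar>\<dots>\<bar> \<le> (\<Sum>i<N. \<Sum>j<N. \<bar>d - t i j\<bar>) / real N ^ 2"
  proof -
    have "\<bar>\<Sum>i<N. \<Sum>j<N. d - t i j\<bar> \<le> (\<Sum>i<N. \<Sum>j<N. \<bar>d - t i j\<bar>)"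
      by (rule order.trans[OF sum_abs sum_mono[OF sum_abs]])
    then show ?thesis by (simp add: abs_divide divide_right_mono)
  qed
  also have "\<dots> \<le> (\<Sum>i<N. \<Sum>j<N. \<epsilon>) / real N ^ 2"
    using close by (intro divide_right_mono sum_mono) auto
  also have "\<dots> = \<epsilon>"
    using assms(1) by (simp add: power2_eq_square)
  finally show ?thesis .
qed

lemma telescoping_product_bound:
  fixes f :: "'b set \<Rightarrow> real"
  assumes "finite F" "f {} = 1" "0 \<le> p" "p \<le> 1"
    and step: "\<And>G e. G \<subseteq> F \<Longrightarrow> e \<in> G \<Longrightarrow> \<bar>f G - p * f (G - {e})\<bar> \<le> \<epsilon>"
  shows "\<bar>f F - p ^ card F\<bar> \<le> real (card F) * \<epsilon>"
proof -
  have "\<bar>f G - p ^ card G\<bar> \<le> real (card G) * \<epsilon>" if "G \<subseteq> F" for G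
    using finite_subset[OF that assms(1)] that
  proof (induction G rule: finite_induct)
    case empty
    then show ?case using assms(2) by simp
  next
    case (insert e G)
    have "\<bar>f (insert e G) - p * f G\<bar> \<le> \<epsilon>"
      using step[of "insert e G" e] insert by simp
    moreover have "\<bar>p * f G - p * p ^ card G\<bar> \<le> real (card G) * \<epsilon>"
    proof -
      have "\<bar>p * f G - p * p ^ card G\<bar> = p * \<bar>f G - p ^ card G\<bar>"
        using assms(3) by (simp add: abs_mult right_diff_distrib[symmetric])
      also have "\<dots> \<le> \<bar>f G - p ^ card G\<bar>"
        using assms(3,4) by (simp add: mult_left_le_one_le)
      finally show ?thesis using insert by simp
    qed
    ultimately show ?case
      using insert by (simp add: algebra_simps)
  qed
  then show ?thesis by simp
qed

lemma prod_dist_power_le: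
  fixes a :: "'b \<Rightarrow> real"
  assumes "\<And>i. i \<in> I \<Longrightarrow> \<bar>a i\<bar> \<le> 1" "\<bar>p\<bar> \<le> 1" "\<And>i. i \<in> I \<Longrightarrow> \<bar>a i - p\<bar> \<le> \<eta>"
  shows "\<bar>(\<Prod>i\<in>I. a i) - p ^ card I\<bar> \<le> real (card I) * \<eta>"
proof -
  have "\<bar>(\<Prod>i\<in>I. a i) - (\<Prod>i\<in>I. p)\<bar> \<le> (\<Sum>i\<in>I. \<bar>a i - p\<bar>)"
    using norm_prod_diff[of I a "\<lambda>_. p"] assms(1,2) by simp
  also have "\<dots> \<le> (\<Sum>i\<in>I. \<eta>)"
    using assms(3) by (rule sum_mono)
  finally show ?thesis by simp
qed

section \<open>Random matrices with few 4-cycles\<close>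

lemma square_ge_of_ge_diff:
  fixes a c p \<eta> :: real
  assumes "c * (p - \<eta>) \<le> a" "0 \<le> c" "0 \<le> p" "p \<le> 1" "0 \<le> \<eta>"
  shows "c\<^sup>2 * (p\<^sup>2 - 2 * \<eta>) \<le> a\<^sup>2"
proof (cases "\<eta> \<le> p")
  case True
  have "p\<^sup>2 - 2 * \<eta> \<le> (p - \<eta>)\<^sup>2"
    using assms(3-5) mult_left_le_one_le[of \<eta> p] zero_le_power2[of \<eta>]
    unfolding power2_diff by linarith
  then have "c\<^sup>2 * (p\<^sup>2 - 2 * \<eta>) \<le> (c * (p - \<eta>))\<^sup>2"
    by (simp add: power_mult_distrib mult_left_mono)
  also have "\<dots> \<le> a\<^sup>2"
    using assms(1,2) True by (intro power_mono) auto
  finally show ?thesis .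
next
  case False
  then have "p\<^sup>2 - 2 * \<eta> \<le> 0"
    using assms(3-5) mult_left_le_one_le[of p p] by (simp add: power2_eq_square)
  then show ?thesis
    by (metis mult_nonneg_nonpos order.trans zero_le_power2)
qed

locale cycle_bounded_random_matrix = prob_space M
  for M :: "'a measure" +
  fixes N :: nat and x :: "nat \<Rightarrow> nat \<Rightarrow> 'a \<Rightarrow> real" and p \<eta> \<delta> :: real
  assumes x_measurable: "\<And>i j. i < N \<Longrightarrow> j < N \<Longrightarrow> x i j \<in> borel_measurable M"
    and x_range: "\<And>i j \<omega>. i < N \<Longrightarrow> j < N \<Longrightarrow> \<omega> \<in> space M \<Longrightarrow> 0 \<le> x i j \<omega> \<and> x i j \<omega> \<le> 1"
    and p_range: "0 \<le> p" "p \<le> 1"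
    and eta_nonneg: "0 \<le> \<eta>" and delta_nonneg: "0 \<le> \<delta>"
    and expectation_x_ge: "\<And>i j. i < N \<Longrightarrow> j < N \<Longrightarrow> p - \<eta> \<le> expectation (x i j)"
    and expectation_cycle_le: "\<And>i i' j j'. i < N \<Longrightarrow> i' < N \<Longrightarrow> j < N \<Longrightarrow> j' < N \<Longrightarrow>
       i \<noteq> i' \<Longrightarrow> j \<noteq> j' \<Longrightarrow>
       expectation (\<lambda>\<omega>. x i j \<omega> * x i j' \<omega> * x i' j \<omega> * x i' j' \<omega>) \<le> p ^ 4 + \<delta>"
begin

lemma bounded_rv_x [simp]: "i < N \<Longrightarrow> j < N \<Longrightarrow> bounded_rv M (x i j)"
  using x_range by (intro bounded_rvI[where B = 1] x_measurable) force+

definition col_deg :: "nat \<Rightarrow> 'a \<Rightarrow> real" where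
  "col_deg j \<omega> = (\<Sum>i<N. x i j \<omega>)"

definition row_deg :: "nat \<Rightarrow> 'a \<Rightarrow> real" where
  "row_deg i \<omega> = (\<Sum>j<N. x i j \<omega>)"

definition col_codeg :: "nat \<Rightarrow> nat \<Rightarrow> 'a \<Rightarrow> real" where
  "col_codeg j j' \<omega> = (\<Sum>i<N. x i j \<omega> * x i j' \<omega>)"

definition cycle_count :: "'a \<Rightarrow> real" where
  "cycle_count \<omega> = (\<Sum>j<N. \<Sum>j'<N. (col_codeg j j' \<omega>)\<^sup>2)"

lemma bounded_rv_col_deg [simp]: "j < N \<Longrightarrow> bounded_rv M (col_deg j)"
  unfolding col_deg_def by simp

lemma bounded_rv_row_deg [simp]: "i < N \<Longrightarrow> bounded_rv M (row_deg i)"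
  unfolding row_deg_def by simp

lemma bounded_rv_col_codeg [simp]: "j < N \<Longrightarrow> j' < N \<Longrightarrow> bounded_rv M (col_codeg j j')"
  unfolding col_codeg_def by simp

lemma bounded_rv_cycle_count [simp]: "bounded_rv M cycle_count"
  unfolding cycle_count_def by simp

lemma cycle_count_eq_sum_cycles:
  "cycle_count \<omega> = (\<Sum>j<N. \<Sum>j'<N. \<Sum>i<N. \<Sum>i'<N. x i j \<omega> * x i j' \<omega> * x i' j \<omega> * x i' j' \<omega>)"
  by (simp add: cycle_count_def col_codeg_def power2_eq_square sum_product mult_ac)

lemma cycle_count_eq_row_codeg:
  "cycle_count \<omega> = (\<Sum>i<N. \<Sum>i'<N. (\<Sum>j<N. x i j \<omega> * x i' j \<omega>)\<^sup>2)"
proof -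
  have "(\<Sum>i<N. \<Sum>i'<N. (\<Sum>j<N. x i j \<omega> * x i' j \<omega>)\<^sup>2)
      = (\<Sum>i<N. \<Sum>i'<N. \<Sum>j<N. \<Sum>j'<N. x i j \<omega> * x i j' \<omega> * x i' j \<omega> * x i' j' \<omega>)"
    by (simp add: power2_eq_square sum_product mult_ac)
  also have "\<dots> = (\<Sum>j<N. \<Sum>j'<N. \<Sum>i<N. \<Sum>i'<N. x i j \<omega> * x i j' \<omega> * x i' j \<omega> * x i' j' \<omega>)"
    by (rule sum_swap_pairs)
  finally show ?thesis by (simp add: cycle_count_eq_sum_cycles)
qed

lemma expectation_cycle_count_le:
  "expectation cycle_count \<le> real N ^ 4 * (p ^ 4 + \<delta>) + 2 * real N ^ 3"
proof -
  define T where "T i i' j j' = (\<lambda>\<omega>. x i j \<omega> * x i j' \<omega> * x i' j \<omega> * x i' j' \<omega>)" for i i' j j'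
  have expectation_T: "expectation (T i i' j j')
      \<le> p ^ 4 + \<delta> + (if i = i' then 1 else 0) + (if j = j' then 1 else 0)"
    if "i < N" "i' < N" "j < N" "j' < N" for i i' j j'
  proof (cases "i \<noteq> i' \<and> j \<noteq> j'")
    case True
    then show ?thesis using expectation_cycle_le[OF that] by (simp add: T_def)
  next
    case False
    have "expectation (T i i' j j') \<le> 1"
      using that x_range by (intro integral_le_const AE_I2) (auto simp: T_def intro!: mult_le_one)
    moreover have "0 \<le> p ^ 4 + \<delta>"
      using p_range delta_nonneg by simp
    ultimately show ?thesis using False by auto
  qed
  have "expectation cycle_count = (\<Sum>j<N. \<Sum>j'<N. \<Sum>i<N. \<Sum>i'<N. expectation (T i i' j j'))"
    unfolding cycle_count_eq_sum_cycles[abs_def] by (simp add: T_def)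
  also have "\<dots> \<le> (\<Sum>j<N. \<Sum>j'<N. \<Sum>i<N. \<Sum>i'<N.
      p ^ 4 + \<delta> + (if i = i' then 1 else 0) + (if j = j' then 1 else 0))"
    by (intro sum_mono expectation_T) auto
  also have "\<dots> = real N ^ 4 * (p ^ 4 + \<delta>) + 2 * real N ^ 3"
    by (simp add: sum.distrib power_numeral_reduce algebra_simps flip: sum_distrib_left)
  finally show ?thesis .
qed

lemma expectation_row_deg_ge: "i < N \<Longrightarrow> real N * (p - \<eta>) \<le> expectation (row_deg i)"
proof -
  assume "i < N"
  then have "expectation (row_deg i) = (\<Sum>j<N. expectation (x i j))"
    unfolding row_deg_def[abs_def] by simp
  also have "\<dots> \<ge> (\<Sum>j<N. p - \<eta>)"
    using \<open>i < N\<close> by (intro sum_mono expectation_x_ge) auto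
  finally show ?thesis by simp
qed

lemma expectation_row_deg_sq_sum_ge:
  "real N ^ 3 * (p\<^sup>2 - 2 * \<eta>) \<le> expectation (\<lambda>\<omega>. \<Sum>i<N. (row_deg i \<omega>)\<^sup>2)"
proof -
  have "real N ^ 2 * (p\<^sup>2 - 2 * \<eta>) \<le> expectation (\<lambda>\<omega>. (row_deg i \<omega>)\<^sup>2)" if "i < N" for i
  proof -
    have "real N ^ 2 * (p\<^sup>2 - 2 * \<eta>) \<le> (expectation (row_deg i))\<^sup>2"
      using expectation_row_deg_ge[OF that] p_range eta_nonneg by (intro square_ge_of_ge_diff) auto
    also have "\<dots> \<le> expectation (\<lambda>\<omega>. (row_deg i \<omega>)\<^sup>2)"
      using that by (intro square_expectation_le) simp
    finally show ?thesis .
  qed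
  then have "(\<Sum>i<N. real N ^ 2 * (p\<^sup>2 - 2 * \<eta>)) \<le> (\<Sum>i<N. expectation (\<lambda>\<omega>. (row_deg i \<omega>)\<^sup>2))"
    by (intro sum_mono) auto
  then show ?thesis by (simp add: power_numeral_reduce mult_ac)
qed

lemma sum_col_codeg_eq: "(\<Sum>j<N. \<Sum>j'<N. col_codeg j j' \<omega>) = (\<Sum>i<N. (row_deg i \<omega>)\<^sup>2)"
  unfolding col_codeg_def row_deg_def power2_eq_square sum_product by (rule sum_rotate3[symmetric])

lemma expectation_col_codeg_dev_le:
  "expectation (\<lambda>\<omega>. \<Sum>j<N. \<Sum>j'<N. (col_codeg j j' \<omega> - real N * p\<^sup>2)\<^sup>2)
    \<le> real N ^ 4 * (\<delta> + 4 * \<eta>) + 2 * real N ^ 3"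
proof -
  have expand: "(\<Sum>j<N. \<Sum>j'<N. (col_codeg j j' \<omega> - real N * p\<^sup>2)\<^sup>2)
      = cycle_count \<omega> - 2 * real N * p\<^sup>2 * (\<Sum>i<N. (row_deg i \<omega>)\<^sup>2) + real N ^ 4 * p ^ 4" for \<omega>
  proof -
    have "(\<Sum>j<N. \<Sum>j'<N. (col_codeg j j' \<omega> - real N * p\<^sup>2)\<^sup>2)
      = cycle_count \<omega> - 2 * real N * p\<^sup>2 * (\<Sum>j<N. \<Sum>j'<N. col_codeg j j' \<omega>) + real N ^ 4 * p ^ 4"
      by (simp add: cycle_count_def power2_diff sum.distrib sum_subtractf power_numeral_reduce
          algebra_simps flip: sum_distrib_left)
    then show ?thesis by (simp only: sum_col_codeg_eq)
  qed
  have "expectation (\<lambda>\<omega>. \<Sum>j<N. \<Sum>j'<N. (col_codeg j j' \<omega> - real N * p\<^sup>2)\<^sup>2)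
      = expectation cycle_count - 2 * real N * p\<^sup>2 * expectation (\<lambda>\<omega>. \<Sum>i<N. (row_deg i \<omega>)\<^sup>2)
        + real N ^ 4 * p ^ 4"
    unfolding expand by (simp add: prob_space)
  also have "\<dots> \<le> (real N ^ 4 * (p ^ 4 + \<delta>) + 2 * real N ^ 3)
      - 2 * real N * p\<^sup>2 * (real N ^ 3 * (p\<^sup>2 - 2 * \<eta>)) + real N ^ 4 * p ^ 4"
    using expectation_cycle_count_le expectation_row_deg_sq_sum_ge
    by (intro add_mono diff_mono mult_left_mono) auto
  also have "\<dots> = real N ^ 4 * (\<delta> + 4 * p\<^sup>2 * \<eta>) + 2 * real N ^ 3"
    by (simp add: algebra_simps power_numeral_reduce)
  also have "\<dots> \<le> real N ^ 4 * (\<delta> + 4 * \<eta>) + 2 * real N ^ 3"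
    using p_range eta_nonneg
    by (intro add_right_mono mult_left_mono add_left_mono) (auto simp: power_le_one mult_left_le_one_le)
  finally show ?thesis .
qed

lemma expectation_col_deg_sq_sum_le:
  "expectation (\<lambda>\<omega>. \<Sum>j<N. (col_deg j \<omega>)\<^sup>2) \<le> real N ^ 3 * (p\<^sup>2 + sqrt (\<delta> + 2 / real N))"
proof -
  let ?D = "\<lambda>\<omega>. \<Sum>j<N. (col_deg j \<omega>)\<^sup>2"
  have pointwise: "(?D \<omega>)\<^sup>2 \<le> real N ^ 2 * cycle_count \<omega>" for \<omega>
  proof -
    have "?D \<omega> = (\<Sum>i<N. \<Sum>i'<N. \<Sum>j<N. x i j \<omega> * x i' j \<omega>)"
      unfolding col_deg_def power2_eq_square sum_product by (rule sum_rotate3)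
    then have "(?D \<omega>)\<^sup>2 \<le> real N ^ 2 * (\<Sum>i<N. \<Sum>i'<N. (\<Sum>j<N. x i j \<omega> * x i' j \<omega>)\<^sup>2)"
      using double_sum_squared_le[of _ "{..<N}"] by simp
    then show ?thesis by (simp only: cycle_count_eq_row_codeg)
  qed
  have "(expectation ?D)\<^sup>2 \<le> expectation (\<lambda>\<omega>. (?D \<omega>)\<^sup>2)"
    by (rule square_expectation_le) simp
  also have "\<dots> \<le> expectation (\<lambda>\<omega>. real N ^ 2 * cycle_count \<omega>)"
    using pointwise by (intro integral_mono) simp_all
  also have "\<dots> \<le> real N ^ 2 * (real N ^ 4 * (p ^ 4 + \<delta>) + 2 * real N ^ 3)"
    using expectation_cycle_count_le by (simp add: mult_left_mono)
  also have "\<dots> = (real N ^ 3)\<^sup>2 * (p ^ 4 + (\<delta> + 2 / real N))"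
    by (cases "N = 0") (simp_all add: field_simps power_numeral_reduce)
  finally have "expectation ?D \<le> sqrt ((real N ^ 3)\<^sup>2 * (p ^ 4 + (\<delta> + 2 / real N)))"
    by (rule real_le_rsqrt)
  also have "\<dots> = real N ^ 3 * sqrt (p ^ 4 + (\<delta> + 2 / real N))"
    by (simp only: real_sqrt_mult real_sqrt_abs power_abs abs_of_nat)
  also have "\<dots> \<le> real N ^ 3 * (p\<^sup>2 + sqrt (\<delta> + 2 / real N))"
  proof -
    have "sqrt (p ^ 4 + (\<delta> + 2 / real N)) \<le> sqrt (p ^ 4) + sqrt (\<delta> + 2 / real N)"
      using delta_nonneg by (intro sqrt_add_le_add_sqrt) auto
    also have "sqrt (p ^ 4) = p\<^sup>2"
      using real_sqrt_abs[of "p\<^sup>2"] by (simp add: power_even_eq)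
    finally show ?thesis by (intro mult_left_mono) auto
  qed
  finally show ?thesis .
qed

lemma expectation_col_deg_dev_le:
  "expectation (\<lambda>\<omega>. \<Sum>j<N. (col_deg j \<omega> - real N * p)\<^sup>2)
    \<le> real N ^ 3 * (sqrt (\<delta> + 2 / real N) + 2 * \<eta>)"
proof -
  have expand: "(\<Sum>j<N. (col_deg j \<omega> - real N * p)\<^sup>2)
      = (\<Sum>j<N. (col_deg j \<omega>)\<^sup>2) - 2 * real N * p * (\<Sum>j<N. col_deg j \<omega>) + real N ^ 3 * p\<^sup>2" for \<omega>
    by (simp add: power2_diff sum.distrib sum_subtractf power_numeral_reduce algebra_simps
        flip: sum_distrib_left)
  have lower: "real N ^ 2 * (p - \<eta>) \<le> expectation (\<lambda>\<omega>. \<Sum>j<N. col_deg j \<omega>)"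
  proof -
    have "expectation (\<lambda>\<omega>. \<Sum>j<N. col_deg j \<omega>) = (\<Sum>j<N. \<Sum>i<N. expectation (x i j))"
      by (simp add: col_deg_def)
    also have "\<dots> \<ge> (\<Sum>j<N. \<Sum>i<N. p - \<eta>)"
      by (intro sum_mono expectation_x_ge) auto
    finally show ?thesis by (simp add: power2_eq_square)
  qed
  have "expectation (\<lambda>\<omega>. \<Sum>j<N. (col_deg j \<omega> - real N * p)\<^sup>2)
      = expectation (\<lambda>\<omega>. \<Sum>j<N. (col_deg j \<omega>)\<^sup>2)
        - 2 * real N * p * expectation (\<lambda>\<omega>. \<Sum>j<N. col_deg j \<omega>) + real N ^ 3 * p\<^sup>2"
    unfolding expand by (simp add: prob_space)
  also have "\<dots> \<le> real N ^ 3 * (p\<^sup>2 + sqrt (\<delta> + 2 / real N))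
      - 2 * real N * p * (real N ^ 2 * (p - \<eta>)) + real N ^ 3 * p\<^sup>2"
    using expectation_col_deg_sq_sum_le lower p_range
    by (intro add_mono diff_mono mult_left_mono) auto
  also have "\<dots> = real N ^ 3 * (sqrt (\<delta> + 2 / real N) + 2 * p * \<eta>)"
    by (simp add: algebra_simps power_numeral_reduce)
  also have "\<dots> \<le> real N ^ 3 * (sqrt (\<delta> + 2 / real N) + 2 * \<eta>)"
    using p_range eta_nonneg by (intro mult_left_mono add_left_mono) (auto simp: mult_left_le_one_le)
  finally show ?thesis .
qed

lemma centered_codeg_sq_sum_le:
  "(\<Sum>j<N. \<Sum>j'<N. (\<Sum>i<N. (x i j \<omega> - p) * (x i j' \<omega> - p))\<^sup>2)
    \<le> 3 * (\<Sum>j<N. \<Sum>j'<N. (col_codeg j j' \<omega> - real N * p\<^sup>2)\<^sup>2)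
      + 6 * real N * (\<Sum>j<N. (col_deg j \<omega> - real N * p)\<^sup>2)"
proof -
  have "(\<Sum>i<N. (x i j \<omega> - p) * (x i j' \<omega> - p))\<^sup>2
      \<le> 3 * (col_codeg j j' \<omega> - real N * p\<^sup>2)\<^sup>2
        + 3 * (col_deg j \<omega> - real N * p)\<^sup>2 + 3 * (col_deg j' \<omega> - real N * p)\<^sup>2" for j j'
  proof -
    define u v w where "u = col_codeg j j' \<omega> - real N * p\<^sup>2"
      and "v = col_deg j \<omega> - real N * p" and "w = col_deg j' \<omega> - real N * p"
    have "(\<Sum>i<N. (x i j \<omega> - p) * (x i j' \<omega> - p)) = u - p * v - p * w"
      by (simp add: u_def v_def w_def col_codeg_def col_deg_def algebra_simps sum_subtractf
          sum.distrib power2_eq_square flip: sum_distrib_left)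
    also have "(u - p * v - p * w)\<^sup>2 \<le> 3 * (u\<^sup>2 + (p * v)\<^sup>2 + (p * w)\<^sup>2)"
    proof -
      have "0 \<le> (u + p * v)\<^sup>2 + (p * v - p * w)\<^sup>2 + (u + p * w)\<^sup>2" by simp
      then show ?thesis by (simp add: power2_eq_square algebra_simps)
    qed
    also have "\<dots> \<le> 3 * (u\<^sup>2 + v\<^sup>2 + w\<^sup>2)"
      using p_range mult_left_le_one_le[of "v\<^sup>2" "p\<^sup>2"] mult_left_le_one_le[of "w\<^sup>2" "p\<^sup>2"]
      by (simp add: power_mult_distrib power_le_one)
    finally show ?thesis by (simp add: u_def v_def w_def)
  qed
  then have "(\<Sum>j<N. \<Sum>j'<N. (\<Sum>i<N. (x i j \<omega> - p) * (x i j' \<omega> - p))\<^sup>2)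
      \<le> (\<Sum>j<N. \<Sum>j'<N. 3 * (col_codeg j j' \<omega> - real N * p\<^sup>2)\<^sup>2
        + 3 * (col_deg j \<omega> - real N * p)\<^sup>2 + 3 * (col_deg j' \<omega> - real N * p)\<^sup>2)"
    by (intro sum_mono)
  also have "\<dots> = 3 * (\<Sum>j<N. \<Sum>j'<N. (col_codeg j j' \<omega> - real N * p\<^sup>2)\<^sup>2)
      + 6 * real N * (\<Sum>j<N. (col_deg j \<omega> - real N * p)\<^sup>2)"
    by (simp add: sum.distrib algebra_simps flip: sum_distrib_left)
  finally show ?thesis .
qed

lemma expectation_centered_codeg_sq_sum_le:
  "expectation (\<lambda>\<omega>. \<Sum>j<N. \<Sum>j'<N. (\<Sum>i<N. (x i j \<omega> - p) * (x i j' \<omega> - p))\<^sup>2)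
    \<le> real N ^ 4 * (3 * \<delta> + 24 * \<eta> + 6 / real N + 6 * sqrt (\<delta> + 2 / real N))"
proof -
  have "expectation (\<lambda>\<omega>. \<Sum>j<N. \<Sum>j'<N. (\<Sum>i<N. (x i j \<omega> - p) * (x i j' \<omega> - p))\<^sup>2)
      \<le> expectation (\<lambda>\<omega>. 3 * (\<Sum>j<N. \<Sum>j'<N. (col_codeg j j' \<omega> - real N * p\<^sup>2)\<^sup>2)
        + 6 * real N * (\<Sum>j<N. (col_deg j \<omega> - real N * p)\<^sup>2))"
    by (intro integral_mono) (simp_all add: centered_codeg_sq_sum_le)
  also have "\<dots> = 3 * expectation (\<lambda>\<omega>. \<Sum>j<N. \<Sum>j'<N. (col_codeg j j' \<omega> - real N * p\<^sup>2)\<^sup>2)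
      + 6 * real N * expectation (\<lambda>\<omega>. \<Sum>j<N. (col_deg j \<omega> - real N * p)\<^sup>2)"
    by simp
  also have "\<dots> \<le> 3 * (real N ^ 4 * (\<delta> + 4 * \<eta>) + 2 * real N ^ 3)
      + 6 * real N * (real N ^ 3 * (sqrt (\<delta> + 2 / real N) + 2 * \<eta>))"
    using expectation_col_codeg_dev_le expectation_col_deg_dev_le
    by (intro add_mono mult_left_mono) auto
  also have "\<dots> = real N ^ 4 * (3 * \<delta> + 24 * \<eta> + 6 / real N + 6 * sqrt (\<delta> + 2 / real N))"
    by (cases "N = 0") (simp_all add: field_simps power_numeral_reduce)
  finally show ?thesis .
qed

theorem weighted_discrepancy_fourth_power_le:
  assumes Y: "\<And>i. i < N \<Longrightarrow> bounded_rv M (Y i)" "\<And>i \<omega>. i < N \<Longrightarrow> \<omega> \<in> space M \<Longrightarrow> \<bar>Y i \<omega>\<bar> \<le> 1"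
    and W: "\<And>j. j < N \<Longrightarrow> bounded_rv M (W j)" "\<And>j \<omega>. j < N \<Longrightarrow> \<omega> \<in> space M \<Longrightarrow> \<bar>W j \<omega>\<bar> \<le> 1"
  shows "(expectation (\<lambda>\<omega>. \<Sum>i<N. Y i \<omega> * (\<Sum>j<N. W j \<omega> * (x i j \<omega> - p)))) ^ 4
    \<le> real N ^ 8 * (3 * \<delta> + 24 * \<eta> + 6 / real N + 6 * sqrt (\<delta> + 2 / real N))"
proof -
  let ?S = "\<lambda>\<omega>. \<Sum>i<N. Y i \<omega> * (\<Sum>j<N. W j \<omega> * (x i j \<omega> - p))"
  let ?G = "\<lambda>\<omega>. \<Sum>j<N. \<Sum>j'<N. (\<Sum>i<N. (x i j \<omega> - p) * (x i j' \<omega> - p))\<^sup>2"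
  have "(expectation ?S) ^ 4 \<le> expectation (\<lambda>\<omega>. ?S \<omega> ^ 4)"
    by (rule fourth_power_expectation_le) (simp add: Y W)
  also have "\<dots> \<le> expectation (\<lambda>\<omega>. real N ^ 4 * ?G \<omega>)"
  proof (rule integral_mono)
    fix \<omega> assume "\<omega> \<in> space M"
    then show "?S \<omega> ^ 4 \<le> real N ^ 4 * ?G \<omega>"
      using weighted_sum_fourth_power_le[of "{..<N}" "\<lambda>i. Y i \<omega>" "\<lambda>j. W j \<omega>" "\<lambda>i j. x i j \<omega> - p"] Y W
      by simp
  qed (simp_all add: Y W)
  also have "\<dots> = real N ^ 4 * expectation ?G"
    by (rule integral_mult_right_zero)
  also have "\<dots> \<le> real N ^ 4 * (real N ^ 4 * (3 * \<delta> + 24 * \<eta> + 6 / real N + 6 * sqrt (\<delta> + 2 / real N)))"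
    by (intro mult_left_mono expectation_centered_codeg_sq_sum_le) simp
  finally show ?thesis by (simp add: power_add[symmetric] mult.assoc[symmetric])
qed

end

section \<open>Spreadable binary arrays\<close>

lemma finite_pairs: "finite I \<Longrightarrow> finite (pairs I)"
  unfolding pairs_def by (rule finite_subset[of _ "Pow I"]) auto

lemma pairs_image: "s \<in> pairs J \<Longrightarrow> inj_on \<sigma> J \<Longrightarrow> \<sigma> ` J \<subseteq> K \<Longrightarrow> \<sigma> ` s \<in> pairs K"
  unfolding pairs_def by (auto simp: card_image[OF inj_on_subset])

lemma pairsE:
  assumes "s \<in> pairs I"
  obtains a b where "a < b" "s = {a, b}" "a \<in> I" "b \<in> I"
proof -
  obtain x y where "x \<noteq> y" "s = {x, y}" "s \<subseteq> I"
    using assms unfolding pairs_def card_2_iff by auto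
  then show thesis
    using that[of x y] that[of y x] by (cases "x < y") (auto simp: insert_commute)
qed

lemma card_Union_pairs_le: "G \<subseteq> pairs I \<Longrightarrow> card (\<Union>G) \<le> 2 * card G"
proof -
  assume "G \<subseteq> pairs I"
  have "card (\<Union>G) \<le> (\<Sum>s\<in>G. card s)"
    by (rule card_Union_le_sum_card)
  also have "\<dots> = 2 * card G"
    using \<open>G \<subseteq> pairs I\<close> by (simp add: pairs_def subset_iff)
  finally show ?thesis .
qed

lemma bij_betw_enum: "finite J \<Longrightarrow> bij_betw (enum J) {1..card J} J"
proof -
  assume "finite J"
  then have "bij_betw ((!) (sorted_list_of_set J)) {..<card J} J"
    by (intro bij_betw_nth) auto
  moreover have "bij_betw (\<lambda>i. i - 1) {1..card J} {..<card J}"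
    by (rule bij_betw_byWitness[where f' = Suc]) auto
  ultimately have "bij_betw ((!) (sorted_list_of_set J) \<circ> (\<lambda>i. i - 1)) {1..card J} J"
    by (rule bij_betw_trans[rotated])
  then show ?thesis
    unfolding enum_def[abs_def] by (simp add: comp_def)
qed

lemma enum_image_strict_mono:
  assumes "finite J" "strict_mono_on J \<sigma>" "i \<in> {1..card J}"
  shows "enum (\<sigma> ` J) i = \<sigma> (enum J i)"
proof -
  let ?l = "sorted_list_of_set J"
  have "sorted_wrt (<) (map \<sigma> ?l)"
    unfolding sorted_wrt_map
    by (rule sorted_wrt_mono_rel[OF _ strict_sorted_list_of_set])
      (use assms in \<open>auto simp: strict_mono_on_def\<close>)
  moreover have "card (\<sigma> ` J) = card J"
    using assms by (simp add: card_image strict_mono_on_imp_inj_on)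
  ultimately have "sorted_list_of_set (\<sigma> ` J) = map \<sigma> ?l"
    using assms by (subst sorted_list_of_set_unique[symmetric]) auto
  then show ?thesis
    using assms unfolding enum_def by auto
qed

(* The pairs of {1..card J} that the increasing enumeration of J maps onto G: the event that
  X is 1 on all of G is the event that the subarray X_J is 1 on index_pattern J G. *)
definition index_pattern :: "nat set \<Rightarrow> nat set set \<Rightarrow> nat set set" where
  "index_pattern J G = {s \<in> pairs {1..card J}. enum J ` s \<in> G}"

lemma image_index_pattern:
  assumes "finite J" "G \<subseteq> pairs J"
  shows "(\<lambda>s. enum J ` s) ` index_pattern J G = G"
proof
  show "(\<lambda>s. enum J ` s) ` index_pattern J G \<subseteq> G"
    unfolding index_pattern_def by auto
  show "G \<subseteq> (\<lambda>s. enum J ` s) ` index_pattern J G"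
  proof
    fix s assume "s \<in> G"
    have bij: "bij_betw (enum J) {1..card J} J"
      using assms(1) by (rule bij_betw_enum)
    define s0 where "s0 = inv_into {1..card J} (enum J) ` s"
    have "s \<subseteq> J" "card s = 2"
      using \<open>s \<in> G\<close> assms(2) by (auto simp: pairs_def)
    then have "enum J ` s0 = s"
      using bij unfolding s0_def bij_betw_def by (intro image_inv_into_cancel) auto
    moreover have "s0 \<subseteq> {1..card J}"
      unfolding s0_def using bij \<open>s \<subseteq> J\<close>
      by (intro image_subsetI inv_into_into) (auto simp: bij_betw_def)
    moreover have "inj_on (enum J) s0"
      using bij calculation(2) by (auto simp: bij_betw_def intro: inj_on_subset)
    ultimately have "s0 \<in> index_pattern J G"
      using \<open>s \<in> G\<close> \<open>card s = 2\<close> card_image unfolding index_pattern_def pairs_def by fastforce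
    then show "s \<in> (\<lambda>s. enum J ` s) ` index_pattern J G"
      using \<open>enum J ` s0 = s\<close> by force
  qed
qed

lemma subarray_image_index_pattern_iff:
  assumes "finite J" "strict_mono_on J \<sigma>" "G \<subseteq> pairs J"
  shows "(\<forall>s\<in>index_pattern J G. subarray X (\<sigma> ` J) \<omega> s = 1) \<longleftrightarrow> (\<forall>s\<in>G. X (\<sigma> ` s) \<omega> = 1)"
proof -
  have "card (\<sigma> ` J) = card J"
    using assms by (simp add: card_image strict_mono_on_imp_inj_on)
  moreover have "enum (\<sigma> ` J) ` s = \<sigma> ` (enum J ` s)" if "s \<subseteq> {1..card J}" for s
    unfolding image_image using that by (intro image_cong[OF refl] enum_image_strict_mono[OF assms(1,2)]) auto
  ultimately have "subarray X (\<sigma> ` J) \<omega> s = X (\<sigma> ` (enum J ` s)) \<omega>" if "s \<in> index_pattern J G" for s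
    using that unfolding subarray_def index_pattern_def pairs_def by auto
  then have "(\<forall>s\<in>index_pattern J G. subarray X (\<sigma> ` J) \<omega> s = 1)
      \<longleftrightarrow> (\<forall>s\<in>(\<lambda>s. enum J ` s) ` index_pattern J G. X (\<sigma> ` s) \<omega> = 1)"
    by auto
  then show ?thesis
    using image_index_pattern[OF assms(1,3)] by simp
qed

locale spreadable_binary_array = prob_space M
  for M :: "'a measure" +
  fixes X :: "nat set \<Rightarrow> 'a \<Rightarrow> real" and n :: nat and \<eta> :: real
  assumes X_measurable: "\<And>s. s \<in> pairs {1..n} \<Longrightarrow> X s \<in> borel_measurable M"
    and X_binary: "\<And>s \<omega>. s \<in> pairs {1..n} \<Longrightarrow> \<omega> \<in> space M \<Longrightarrow> X s \<omega> \<in> {0, 1}"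
    and X_spreadable: "spreadable M n \<eta> X"
begin

lemma X_range: "s \<in> pairs {1..n} \<Longrightarrow> \<omega> \<in> space M \<Longrightarrow> 0 \<le> X s \<omega> \<and> X s \<omega> \<le> 1"
  using X_binary by fastforce

lemma bounded_rv_X [simp]: "s \<in> pairs {1..n} \<Longrightarrow> bounded_rv M (X s)"
  using X_range by (intro bounded_rvI[where B = 1] X_measurable) force+

lemma expectation_X_range: "s \<in> pairs {1..n} \<Longrightarrow> 0 \<le> expectation (X s) \<and> expectation (X s) \<le> 1"
  using X_range by (auto intro!: integral_ge_const integral_le_const AE_I2)

lemma abs_prod_X_le_1:
  "(\<And>s. s \<in> H \<Longrightarrow> \<phi> s \<in> pairs {1..n}) \<Longrightarrow> \<omega> \<in> space M \<Longrightarrow> \<bar>\<Prod>s\<in>H. X (\<phi> s) \<omega>\<bar> \<le> 1"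
  unfolding abs_prod using X_range by (intro prod_le_1) auto

lemma expectation_prod_image_close:
  assumes J: "J \<subseteq> {1..n}" "2 \<le> card J" and \<sigma>: "strict_mono_on J \<sigma>" "\<sigma> ` J \<subseteq> {1..n}"
    and G: "G \<subseteq> pairs J"
  shows "\<bar>expectation (\<lambda>\<omega>. \<Prod>s\<in>G. X s \<omega>) - expectation (\<lambda>\<omega>. \<Prod>s\<in>G. X (\<sigma> ` s) \<omega>)\<bar> \<le> \<eta>"
proof -
  have "finite J"
    using J(1) finite_subset by blast
  then have "finite G"
    using G finite_pairs finite_subset by blast
  define A :: "(nat set \<Rightarrow> real) set" where "A = {v. \<forall>s\<in>index_pattern J G. v s = 1}"
  have event: "expectation (\<lambda>\<omega>. \<Prod>s\<in>G. X (\<tau> ` s) \<omega>)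
      = measure M {\<omega> \<in> space M. subarray X (\<tau> ` J) \<omega> \<in> A}"
    if "strict_mono_on J \<tau>" "\<tau> ` J \<subseteq> {1..n}" for \<tau>
  proof -
    have "\<tau> ` s \<in> pairs {1..n}" if "s \<in> G" for s
      using \<open>s \<in> G\<close> G \<open>\<tau> ` J \<subseteq> {1..n}\<close> strict_mono_on_imp_inj_on[OF \<open>strict_mono_on J \<tau>\<close>]
      by (auto intro: pairs_image)
    then have "expectation (\<lambda>\<omega>. \<Prod>s\<in>G. X (\<tau> ` s) \<omega>) = prob {\<omega> \<in> space M. \<forall>s\<in>G. X (\<tau> ` s) \<omega> = 1}"
      using \<open>finite G\<close> X_binary by (intro expectation_prod_binary) auto
    also have "\<dots> = measure M {\<omega> \<in> space M. subarray X (\<tau> ` J) \<omega> \<in> A}"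
      using subarray_image_index_pattern_iff[OF \<open>finite J\<close> that(1) G, of X] unfolding A_def by simp
    finally show ?thesis .
  qed
  have "card (\<sigma> ` J) = card J"
    using \<sigma>(1) by (simp add: card_image strict_mono_on_imp_inj_on)
  then have "\<forall>A. \<bar>measure M {\<omega> \<in> space M. subarray X J \<omega> \<in> A}
      - measure M {\<omega> \<in> space M. subarray X (\<sigma> ` J) \<omega> \<in> A}\<bar> \<le> \<eta>"
    using X_spreadable J \<sigma>(2) unfolding spreadable_def by presburger
  then have "\<bar>measure M {\<omega> \<in> space M. subarray X J \<omega> \<in> A}
      - measure M {\<omega> \<in> space M. subarray X (\<sigma> ` J) \<omega> \<in> A}\<bar> \<le> \<eta>" ..
  moreover have "strict_mono_on J id"
    by (simp add: strict_mono_on_def)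
  ultimately show ?thesis
    using event[OF \<sigma>] event[of id] J(1) by simp
qed

lemma abs_prod_expectation_diff_le_1:
  assumes "F \<subseteq> pairs {1..n}"
  shows "\<bar>expectation (\<lambda>\<omega>. \<Prod>s\<in>F. X s \<omega>) - (\<Prod>s\<in>F. expectation (X s))\<bar> \<le> 1"
proof -
  have "0 \<le> expectation (\<lambda>\<omega>. \<Prod>s\<in>F. X s \<omega>)" "expectation (\<lambda>\<omega>. \<Prod>s\<in>F. X s \<omega>) \<le> 1"
    using X_range subsetD[OF assms]
    by (auto intro!: integral_nonneg_AE integral_le_const AE_I2 prod_nonneg prod_le_1)
  moreover have "0 \<le> (\<Prod>s\<in>F. expectation (X s))" "(\<Prod>s\<in>F. expectation (X s)) \<le> 1"
    using expectation_X_range subsetD[OF assms] by (auto intro: prod_nonneg prod_le_1)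
  ultimately show ?thesis
    by linarith
qed

definition edge_density :: real where
  "edge_density = expectation (X {1, 2})"

lemma edge_density_range: "2 \<le> n \<Longrightarrow> 0 \<le> edge_density \<and> edge_density \<le> 1"
  unfolding edge_density_def by (intro expectation_X_range) (auto simp: pairs_def)

lemma expectation_X_close:
  assumes "s \<in> pairs {1..n}"
  shows "\<bar>expectation (X s) - edge_density\<bar> \<le> \<eta>"
proof -
  obtain a b where ab: "a < b" "s = {a, b}" "a \<in> {1..n}" "b \<in> {1..n}"
    using assms by (rule pairsE)
  define \<sigma> where "\<sigma> i = (if i = 1 then a else b)" for i :: nat
  have "strict_mono_on {1, 2} \<sigma>"
    using ab unfolding \<sigma>_def strict_mono_on_def by auto
  then have "\<bar>expectation (\<lambda>\<omega>. \<Prod>s\<in>{{1, 2}}. X s \<omega>) - expectation (\<lambda>\<omega>. \<Prod>s\<in>{{1, 2}}. X (\<sigma> ` s) \<omega>)\<bar> \<le> \<eta>"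
    using ab by (intro expectation_prod_image_close) (auto simp: \<sigma>_def pairs_def)
  moreover have "\<sigma> ` {1, 2} = s"
    using ab by (auto simp: \<sigma>_def)
  ultimately show ?thesis
    by (simp add: edge_density_def abs_minus_commute)
qed

end

section \<open>Removing an edge\<close>

definition rank :: "nat set \<Rightarrow> nat \<Rightarrow> nat" where
  "rank V v = card {w \<in> V. w < v} + 1"

lemma rank_less:
  assumes "finite V" "v \<in> V" "v < w"
  shows "rank V v < rank V w"
proof -
  have "{u \<in> V. u < v} \<subset> {u \<in> V. u < w}"
    using assms by auto
  then show ?thesis
    unfolding rank_def using assms(1) by (simp add: psubset_card_mono)
qed

lemma rank_le_card:
  assumes "finite V" "v \<in> V"
  shows "rank V v \<le> card V"
proof -
  have "{w \<in> V. w < v} \<subset> V"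
    using assms(2) by auto
  then have "card {w \<in> V. w < v} < card V"
    using psubset_card_mono[OF assms(1)] by blast
  then show ?thesis
    unfolding rank_def by simp
qed

(* The (i, j)-th of the N^2 blown-up copies of V over which the edge {a, b} is averaged. *)
definition block_embedding :: "nat \<Rightarrow> nat set \<Rightarrow> nat \<Rightarrow> nat \<Rightarrow> nat \<Rightarrow> nat \<Rightarrow> nat \<Rightarrow> nat" where
  "block_embedding N V a b i j v = N * rank V v + (if v = a then i else if v = b then j else 0)"

lemma block_embedding_bounds:
  assumes "i < N" "j < N"
  shows "N * rank V v \<le> block_embedding N V a b i j v" "block_embedding N V a b i j v < N * (rank V v + 1)"
  using assms by (simp_all add: block_embedding_def)

lemma strict_mono_on_block_embedding:
  assumes "finite V" "i < N" "j < N"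
  shows "strict_mono_on V (block_embedding N V a b i j)"
proof (rule strict_mono_onI)
  fix v w assume "v \<in> V" "w \<in> V" "v < w"
  then have "rank V v + 1 \<le> rank V w"
    using rank_less[OF assms(1)] by (simp add: Suc_le_eq)
  then have "N * (rank V v + 1) \<le> N * rank V w"
    by (rule mult_le_mono2)
  then show "block_embedding N V a b i j v < block_embedding N V a b i j w"
    using block_embedding_bounds[OF assms(2,3)] by (meson order.strict_trans2 order.trans)
qed

lemma block_embedding_range:
  assumes "finite V" "i < N" "j < N" "N * (card V + 1) \<le> n"
  shows "block_embedding N V a b i j ` V \<subseteq> {1..n}"
proof
  fix y assume "y \<in> block_embedding N V a b i j ` V"
  then obtain v where v: "v \<in> V" "y = block_embedding N V a b i j v" by blast
  have "N * 1 \<le> N * rank V v"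
    by (rule mult_le_mono2) (simp add: rank_def)
  moreover have "N * (rank V v + 1) \<le> N * (card V + 1)"
    using rank_le_card[OF assms(1) v(1)] by (intro mult_le_mono2) simp
  moreover note block_embedding_bounds[OF assms(2,3), where V = V and v = v and a = a and b = b]
  ultimately show "y \<in> {1..n}"
    unfolding atLeastAtMost_iff using v(2) assms(2,4) by linarith
qed

lemma block_embedding_edge:
  "a \<noteq> b \<Longrightarrow> block_embedding N V a b i j ` {a, b} = {N * rank V a + i, N * rank V b + j}"
  unfolding block_embedding_def by auto

lemma block_embedding_image_without_left:
  "a \<notin> s \<Longrightarrow> block_embedding N V a b i j ` s = block_embedding N V a b 0 j ` s"
  unfolding block_embedding_def by (intro image_cong) auto

lemma block_embedding_image_without_right:
  "b \<notin> s \<Longrightarrow> block_embedding N V a b i j ` s = block_embedding N V a b i 0 ` s"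
  unfolding block_embedding_def by (intro image_cong) auto

lemma prod_block_embedding_split:
  fixes f :: "nat set \<Rightarrow> real" and N :: nat and V :: "nat set"
  assumes "G \<subseteq> pairs I" "a \<noteq> b" "finite G"
  defines "\<sigma> \<equiv> block_embedding N V a b"
  shows "(\<Prod>s\<in>G - {{a, b}}. f (\<sigma> i j ` s))
    = (\<Prod>s\<in>{s \<in> G - {{a, b}}. b \<notin> s}. f (\<sigma> i 0 ` s)) * (\<Prod>s\<in>{s \<in> G - {{a, b}}. b \<in> s}. f (\<sigma> 0 j ` s))"
proof -
  define P Q where "P = {s \<in> G - {{a, b}}. b \<notin> s}" and "Q = {s \<in> G - {{a, b}}. b \<in> s}"
  have a_notin: "a \<notin> s" if "s \<in> Q" for s
  proof
    assume "a \<in> s"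
    moreover have "b \<in> s" "card s = 2" "s \<noteq> {a, b}"
      using that assms(1) unfolding Q_def pairs_def by auto
    moreover have "finite s"
      using \<open>card s = 2\<close> card.infinite by fastforce
    ultimately show False
      using card_subset_eq[of s "{a, b}"] assms(2) by auto
  qed
  have "G - {{a, b}} = P \<union> Q" "P \<inter> Q = {}" "finite P" "finite Q"
    using assms(3) unfolding P_def Q_def by auto
  then have "(\<Prod>s\<in>G - {{a, b}}. f (\<sigma> i j ` s)) = (\<Prod>s\<in>P. f (\<sigma> i j ` s)) * (\<Prod>s\<in>Q. f (\<sigma> i j ` s))"
    by (simp add: prod.union_disjoint)
  also have "(\<Prod>s\<in>P. f (\<sigma> i j ` s)) = (\<Prod>s\<in>P. f (\<sigma> i 0 ` s))"
    unfolding \<sigma>_def P_def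
    by (intro prod.cong refl arg_cong[where f = f] block_embedding_image_without_right) simp
  also have "(\<Prod>s\<in>Q. f (\<sigma> i j ` s)) = (\<Prod>s\<in>Q. f (\<sigma> 0 j ` s))"
    unfolding \<sigma>_def
    by (intro prod.cong refl arg_cong[where f = f] block_embedding_image_without_left a_notin)
  finally show ?thesis
    unfolding P_def Q_def .
qed

locale box_spreadable_array = spreadable_binary_array +
  fixes \<theta> :: real
  assumes eta_range: "0 \<le> \<eta>" "\<eta> \<le> 1" and theta_nonneg: "0 \<le> \<theta>"
    and box: "\<And>i j k l. 1 \<le> i \<Longrightarrow> i < j \<Longrightarrow> j < k \<Longrightarrow> k < l \<Longrightarrow> l \<le> n \<Longrightarrow>
       (\<integral>\<omega>. X {i,k} \<omega> * X {i,l} \<omega> * X {j,k} \<omega> * X {j,l} \<omega> \<partial>M)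
         \<le> (\<integral>\<omega>. X {i,k} \<omega> \<partial>M) * (\<integral>\<omega>. X {i,l} \<omega> \<partial>M)
            * (\<integral>\<omega>. X {j,k} \<omega> \<partial>M) * (\<integral>\<omega>. X {j,l} \<omega> \<partial>M) + \<theta>"
begin

lemma expectation_four_cycle_le:
  assumes "1 \<le> i" "i < j" "j < k" "k < l" "l \<le> n"
  shows "expectation (\<lambda>\<omega>. X {i,k} \<omega> * X {i,l} \<omega> * X {j,k} \<omega> * X {j,l} \<omega>)
    \<le> edge_density ^ 4 + (\<theta> + 15 * \<eta>)"
proof -
  let ?p = edge_density
  have p: "0 \<le> ?p" "?p \<le> 1"
    using edge_density_range assms by auto
  have E: "0 \<le> expectation (X s) \<and> expectation (X s) \<le> ?p + \<eta>" if "s \<in> pairs {1..n}" for s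
    using expectation_X_range[OF that] expectation_X_close[OF that] by (auto simp: abs_le_iff)
  have "{i,k} \<in> pairs {1..n}" "{i,l} \<in> pairs {1..n}" "{j,k} \<in> pairs {1..n}" "{j,l} \<in> pairs {1..n}"
    using assms by (auto simp: pairs_def)
  note bounds = E[OF this(1)] E[OF this(2)] E[OF this(3)] E[OF this(4)]
  have "expectation (X {i,k}) * expectation (X {i,l}) * expectation (X {j,k}) * expectation (X {j,l})
      \<le> (?p + \<eta>) * (?p + \<eta>) * (?p + \<eta>) * (?p + \<eta>)"
    using bounds by (intro mult_mono mult_nonneg_nonneg) simp_all
  also have "\<dots> = ?p ^ 4 + \<eta> * (4 * ?p ^ 3 + 6 * (?p\<^sup>2 * \<eta>) + 4 * (?p * \<eta>\<^sup>2) + \<eta> ^ 3)"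
    by (simp add: algebra_simps power2_eq_square power3_eq_cube power4_eq_xxxx)
  also have "\<dots> \<le> ?p ^ 4 + \<eta> * 15"
  proof -
    have "?p ^ 3 \<le> 1" "?p\<^sup>2 * \<eta> \<le> 1" "?p * \<eta>\<^sup>2 \<le> 1" "\<eta> ^ 3 \<le> 1"
      using p eta_range by (simp_all add: power_le_one mult_le_one)
    then have "4 * ?p ^ 3 + 6 * (?p\<^sup>2 * \<eta>) + 4 * (?p * \<eta>\<^sup>2) + \<eta> ^ 3 \<le> 15"
      by linarith
    then show ?thesis
      using eta_range(1) by (simp add: mult_left_mono)
  qed
  finally show ?thesis
    using box[OF assms] by simp
qed

lemma cycle_bounded_block:
  assumes "0 < N" "1 \<le> A" "A + N \<le> B" "B + N \<le> n + 1"
  shows "cycle_bounded_random_matrix M N (\<lambda>i j. X {A + i, B + j}) edge_density \<eta> (\<theta> + 15 * \<eta>)"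
proof -
  have pair: "{A + i, B + j} \<in> pairs {1..n}" if "i < N" "j < N" for i j
    using that assms by (auto simp: pairs_def)
  have ordered: "expectation (\<lambda>\<omega>. X {A + i, B + j} \<omega> * X {A + i, B + j'} \<omega> * X {A + i', B + j} \<omega>
      * X {A + i', B + j'} \<omega>) \<le> edge_density ^ 4 + (\<theta> + 15 * \<eta>)"
    if "i < i'" "i' < N" "j < j'" "j' < N" for i i' j j'
    using that assms by (intro expectation_four_cycle_le) auto
  show ?thesis
  proof unfold_locales
    fix i j assume "i < N" "j < N"
    then show "edge_density - \<eta> \<le> expectation (X {A + i, B + j})"
      using expectation_X_close[OF pair[OF \<open>i < N\<close> \<open>j < N\<close>]] by (simp add: abs_le_iff)
  next
    fix i i' j j' assume "i < N" "i' < N" "j < N" "j' < N" "i \<noteq> i'" "j \<noteq> j'"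
    then consider "i < i'" "j < j'" | "i' < i" "j < j'" | "i < i'" "j' < j" | "i' < i" "j' < j"
      by linarith
    then show "expectation (\<lambda>\<omega>. X {A + i, B + j} \<omega> * X {A + i, B + j'} \<omega> * X {A + i', B + j} \<omega>
      * X {A + i', B + j'} \<omega>) \<le> edge_density ^ 4 + (\<theta> + 15 * \<eta>)"
      using ordered[of i i' j j'] ordered[of i' i j j'] ordered[of i i' j' j] ordered[of i' i j' j]
        \<open>i < N\<close> \<open>i' < N\<close> \<open>j < N\<close> \<open>j' < N\<close>
      by cases (simp_all add: mult_ac)
  qed (use pair X_measurable X_range edge_density_range eta_range theta_nonneg assms in auto)
qed

end

locale edge_removal = box_spreadable_array +
  fixes G :: "nat set set" and a b N :: nat
  assumes G_pairs: "G \<subseteq> pairs {1..n}" and edge_in: "{a, b} \<in> G" and a_less_b: "a < b"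
    and N_pos: "0 < N" and N_fits: "N * (card (\<Union>G) + 1) \<le> n"
begin

definition embed :: "nat \<Rightarrow> nat \<Rightarrow> nat \<Rightarrow> nat" where
  "embed = block_embedding N (\<Union>G) a b"

definition row_offset :: nat where
  "row_offset = N * rank (\<Union>G) a"

definition col_offset :: nat where
  "col_offset = N * rank (\<Union>G) b"

(* An edge of G - {e} without b only feels the shift i of a, one with b (hence without a) only the
  shift j of b, so every blown-up copy of G factorises as x_ij * Y i * W j. *)
definition Y :: "nat \<Rightarrow> 'a \<Rightarrow> real" where
  "Y i = (\<lambda>\<omega>. \<Prod>s\<in>{s \<in> G - {{a, b}}. b \<notin> s}. X (embed i 0 ` s) \<omega>)"

definition W :: "nat \<Rightarrow> 'a \<Rightarrow> real" where
  "W j = (\<lambda>\<omega>. \<Prod>s\<in>{s \<in> G - {{a, b}}. b \<in> s}. X (embed 0 j ` s) \<omega>)"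

lemma vertices: "\<Union>G \<subseteq> {1..n}" "finite (\<Union>G)" "G \<subseteq> pairs (\<Union>G)" "2 \<le> card (\<Union>G)"
proof -
  show "\<Union>G \<subseteq> {1..n}" "G \<subseteq> pairs (\<Union>G)"
    using G_pairs unfolding pairs_def by auto
  then show "finite (\<Union>G)"
    using finite_subset by blast
  moreover have "{a, b} \<subseteq> \<Union>G"
    using edge_in by auto
  ultimately have "card {a, b} \<le> card (\<Union>G)"
    by (rule card_mono)
  then show "2 \<le> card (\<Union>G)"
    using a_less_b by simp
qed

lemma finite_G: "finite G"
  using G_pairs finite_pairs finite_subset by blast

lemma embed_strict_mono: "i < N \<Longrightarrow> j < N \<Longrightarrow> strict_mono_on (\<Union>G) (embed i j)"
  unfolding embed_def using vertices(2) by (rule strict_mono_on_block_embedding)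

lemma embed_range: "i < N \<Longrightarrow> j < N \<Longrightarrow> embed i j ` \<Union>G \<subseteq> {1..n}"
  unfolding embed_def using vertices(2) _ _ N_fits by (rule block_embedding_range)

lemma embed_pairs: "s \<in> G \<Longrightarrow> i < N \<Longrightarrow> j < N \<Longrightarrow> embed i j ` s \<in> pairs {1..n}"
  by (rule pairs_image[OF _ strict_mono_on_imp_inj_on[OF embed_strict_mono] embed_range])
    (use vertices(3) in auto)

lemma block: "cycle_bounded_random_matrix M N (\<lambda>i j. X {row_offset + i, col_offset + j})
    edge_density \<eta> (\<theta> + 15 * \<eta>)"
proof (rule cycle_bounded_block)
  have "a \<in> \<Union>G" "b \<in> \<Union>G"
    using edge_in by auto
  then have "1 \<le> rank (\<Union>G) a" "rank (\<Union>G) a + 1 \<le> rank (\<Union>G) b" "rank (\<Union>G) b \<le> card (\<Union>G)"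
    using rank_less[OF vertices(2) _ a_less_b] rank_le_card[OF vertices(2)] by (auto simp: rank_def Suc_le_eq)
  then have "N * 1 \<le> row_offset" "N * (rank (\<Union>G) a + 1) \<le> col_offset" "col_offset \<le> N * card (\<Union>G)"
    unfolding row_offset_def col_offset_def by (simp_all only: mult_le_mono2)
  then show "1 \<le> row_offset" "row_offset + N \<le> col_offset" "col_offset + N \<le> n + 1"
    using N_pos N_fits unfolding row_offset_def by (simp_all add: algebra_simps)
qed (rule N_pos)

lemma prod_embed_remove_edge: "(\<Prod>s\<in>G - {{a, b}}. X (embed i j ` s) \<omega>) = Y i \<omega> * W j \<omega>"
  unfolding Y_def W_def embed_def using G_pairs a_less_b finite_G
  by (intro prod_block_embedding_split) auto

lemma prod_embed: "(\<Prod>s\<in>G. X (embed i j ` s) \<omega>) = X {row_offset + i, col_offset + j} \<omega> * (Y i \<omega> * W j \<omega>)"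
proof -
  have "embed i j ` {a, b} = {row_offset + i, col_offset + j}"
    unfolding embed_def row_offset_def col_offset_def using a_less_b by (intro block_embedding_edge) simp
  then show ?thesis
    using prod.remove[OF finite_G edge_in, of "\<lambda>s. X (embed i j ` s) \<omega>"] prod_embed_remove_edge by simp
qed

lemma Y_bounded: "i < N \<Longrightarrow> bounded_rv M (Y i)" "i < N \<Longrightarrow> \<omega> \<in> space M \<Longrightarrow> \<bar>Y i \<omega>\<bar> \<le> 1"
  unfolding Y_def using embed_pairs N_pos by (auto intro!: abs_prod_X_le_1)

lemma W_bounded: "j < N \<Longrightarrow> bounded_rv M (W j)" "j < N \<Longrightarrow> \<omega> \<in> space M \<Longrightarrow> \<bar>W j \<omega>\<bar> \<le> 1"
  unfolding W_def using embed_pairs N_pos by (auto intro!: abs_prod_X_le_1)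

lemma two_le_n: "2 \<le> n"
proof -
  have "N * 2 \<le> N * (card (\<Union>G) + 1)"
    using vertices(4) by (intro mult_le_mono2) simp
  moreover have "2 \<le> N * 2"
    using N_pos by simp
  ultimately show ?thesis
    using N_fits by linarith
qed

lemma embedded_defect_close:
  assumes "i < N" "j < N"
  shows "\<bar>(expectation (\<lambda>\<omega>. \<Prod>s\<in>G. X s \<omega>) - edge_density * expectation (\<lambda>\<omega>. \<Prod>s\<in>G - {{a, b}}. X s \<omega>))
    - (expectation (\<lambda>\<omega>. \<Prod>s\<in>G. X (embed i j ` s) \<omega>)
       - edge_density * expectation (\<lambda>\<omega>. \<Prod>s\<in>G - {{a, b}}. X (embed i j ` s) \<omega>))\<bar> \<le> 2 * \<eta>"
proof -
  have close: "\<bar>expectation (\<lambda>\<omega>. \<Prod>s\<in>H. X s \<omega>) - expectation (\<lambda>\<omega>. \<Prod>s\<in>H. X (embed i j ` s) \<omega>)\<bar> \<le> \<eta>"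
    if "H \<subseteq> G" for H
    using vertices(1,4) embed_strict_mono[OF assms] embed_range[OF assms] that vertices(3)
    by (intro expectation_prod_image_close) auto
  have "\<bar>edge_density * (expectation (\<lambda>\<omega>. \<Prod>s\<in>G - {{a, b}}. X s \<omega>)
      - expectation (\<lambda>\<omega>. \<Prod>s\<in>G - {{a, b}}. X (embed i j ` s) \<omega>))\<bar> \<le> \<eta>"
    using close[of "G - {{a, b}}"] edge_density_range[OF two_le_n]
    by (simp add: abs_mult) (meson mult_left_le_one_le abs_ge_zero order.trans)
  then show ?thesis
    using close[of G] by (simp add: right_diff_distrib abs_le_iff)
qed

lemma sum_embedded_defect:
  "(\<Sum>i<N. \<Sum>j<N. expectation (\<lambda>\<omega>. \<Prod>s\<in>G. X (embed i j ` s) \<omega>)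
      - edge_density * expectation (\<lambda>\<omega>. \<Prod>s\<in>G - {{a, b}}. X (embed i j ` s) \<omega>))
    = expectation (\<lambda>\<omega>. \<Sum>i<N. Y i \<omega> * (\<Sum>j<N. W j \<omega> * (X {row_offset + i, col_offset + j} \<omega> - edge_density)))"
proof -
  interpret block: cycle_bounded_random_matrix M N "\<lambda>i j. X {row_offset + i, col_offset + j}"
    edge_density \<eta> "\<theta> + 15 * \<eta>"
    by (rule block)
  have "expectation (\<lambda>\<omega>. \<Prod>s\<in>G. X (embed i j ` s) \<omega>)
      - edge_density * expectation (\<lambda>\<omega>. \<Prod>s\<in>G - {{a, b}}. X (embed i j ` s) \<omega>)
    = expectation (\<lambda>\<omega>. Y i \<omega> * (W j \<omega> * (X {row_offset + i, col_offset + j} \<omega> - edge_density)))"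
    if "i < N" "j < N" for i j
  proof -
    have "expectation (\<lambda>\<omega>. Y i \<omega> * (W j \<omega> * (X {row_offset + i, col_offset + j} \<omega> - edge_density)))
      = expectation (\<lambda>\<omega>. X {row_offset + i, col_offset + j} \<omega> * (Y i \<omega> * W j \<omega>)
          - edge_density * (Y i \<omega> * W j \<omega>))"
      by (simp add: algebra_simps)
    also have "\<dots> = expectation (\<lambda>\<omega>. X {row_offset + i, col_offset + j} \<omega> * (Y i \<omega> * W j \<omega>))
        - edge_density * expectation (\<lambda>\<omega>. Y i \<omega> * W j \<omega>)"
      using that Y_bounded W_bounded by simp
    finally show ?thesis
      by (simp add: prod_embed prod_embed_remove_edge)
  qed
  then have "(\<Sum>i<N. \<Sum>j<N. expectation (\<lambda>\<omega>. \<Prod>s\<in>G. X (embed i j ` s) \<omega>)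
      - edge_density * expectation (\<lambda>\<omega>. \<Prod>s\<in>G - {{a, b}}. X (embed i j ` s) \<omega>))
    = (\<Sum>i<N. \<Sum>j<N. expectation (\<lambda>\<omega>. Y i \<omega> * (W j \<omega> * (X {row_offset + i, col_offset + j} \<omega> - edge_density))))"
    by simp
  also have "\<dots> = expectation (\<lambda>\<omega>. \<Sum>i<N. \<Sum>j<N. Y i \<omega> * (W j \<omega> * (X {row_offset + i, col_offset + j} \<omega> - edge_density)))"
    using Y_bounded W_bounded by simp
  finally show ?thesis
    by (simp add: sum_distrib_left)
qed

theorem remove_edge_le:
  "\<bar>expectation (\<lambda>\<omega>. \<Prod>s\<in>G. X s \<omega>) - edge_density * expectation (\<lambda>\<omega>. \<Prod>s\<in>G - {{a, b}}. X s \<omega>)\<bar>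
    \<le> 2 * \<eta> + root 4 (3 * \<theta> + 69 * \<eta> + 6 / real N + 6 * sqrt (\<theta> + 15 * \<eta> + 2 / real N))"
proof -
  interpret block: cycle_bounded_random_matrix M N "\<lambda>i j. X {row_offset + i, col_offset + j}"
    edge_density \<eta> "\<theta> + 15 * \<eta>"
    by (rule block)
  let ?S = "expectation (\<lambda>\<omega>. \<Sum>i<N. Y i \<omega> * (\<Sum>j<N. W j \<omega> * (X {row_offset + i, col_offset + j} \<omega> - edge_density)))"
  let ?B = "3 * \<theta> + 69 * \<eta> + 6 / real N + 6 * sqrt (\<theta> + 15 * \<eta> + 2 / real N)"
  have "3 * (\<theta> + 15 * \<eta>) + 24 * \<eta> = 3 * \<theta> + 69 * \<eta>"
    by simp
  then have "?S ^ 4 \<le> real N ^ 8 * ?B"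
    using block.weighted_discrepancy_fourth_power_le[OF Y_bounded W_bounded] by (simp only:)
  moreover have "(\<bar>?S\<bar> / real N ^ 2) ^ 4 = ?S ^ 4 / real N ^ 8"
    by (simp add: power_divide power_even_abs flip: power_mult)
  ultimately have "(\<bar>?S\<bar> / real N ^ 2) ^ 4 \<le> ?B"
    using N_pos by (simp add: divide_le_eq mult.commute)
  then have "root 4 ((\<bar>?S\<bar> / real N ^ 2) ^ 4) \<le> root 4 ?B"
    by simp
  then have "\<bar>?S / real N ^ 2\<bar> \<le> root 4 ?B"
    by (simp add: real_root_power_cancel)
  moreover have "\<bar>(expectation (\<lambda>\<omega>. \<Prod>s\<in>G. X s \<omega>) - edge_density * expectation (\<lambda>\<omega>. \<Prod>s\<in>G - {{a, b}}. X s \<omega>))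
      - ?S / real N ^ 2\<bar> \<le> 2 * \<eta>"
  proof -
    have "\<bar>(expectation (\<lambda>\<omega>. \<Prod>s\<in>G. X s \<omega>) - edge_density * expectation (\<lambda>\<omega>. \<Prod>s\<in>G - {{a, b}}. X s \<omega>))
      - (\<Sum>i<N. \<Sum>j<N. expectation (\<lambda>\<omega>. \<Prod>s\<in>G. X (embed i j ` s) \<omega>)
          - edge_density * expectation (\<lambda>\<omega>. \<Prod>s\<in>G - {{a, b}}. X (embed i j ` s) \<omega>)) / real N ^ 2\<bar>
      \<le> 2 * \<eta>"
      by (rule dist_double_average_le[OF N_pos embedded_defect_close])
    then show ?thesis
      by (simp only: sum_embedded_defect)
  qed
  ultimately show ?thesis
    by linarith
qed

end

section \<open>The estimate\<close>

lemma edge_error_le: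
  fixes x \<theta> \<eta> :: real and N :: nat
  assumes x: "0 < x" "x \<le> 1" and \<theta>: "0 \<le> \<theta>" "\<theta> \<le> x ^ 16" and \<eta>: "0 \<le> \<eta>" "\<eta> \<le> x ^ 16"
    and N: "1 / real N \<le> x ^ 8"
  shows "2 * \<eta> + root 4 (3 * \<theta> + 69 * \<eta> + 6 / real N + 6 * sqrt (\<theta> + 15 * \<eta> + 2 / real N))
    \<le> 6 * x"
proof -
  have powers: "x ^ 16 \<le> x ^ 8" "x ^ 8 \<le> x ^ 4" "x ^ 16 \<le> x"
    using x power_decreasing[of 1 16 x] by (auto intro!: power_decreasing)
  have "\<theta> + 15 * \<eta> + 2 / real N \<le> (5 * x ^ 4)\<^sup>2"
  proof -
    have "\<theta> + 15 * \<eta> + 2 / real N \<le> 18 * x ^ 8"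
      using \<theta> \<eta> N powers by (simp add: divide_inverse)
    also have "\<dots> \<le> (5 * x ^ 4)\<^sup>2"
      using x by (simp add: power_mult_distrib flip: power_mult)
    finally show ?thesis .
  qed
  then have "sqrt (\<theta> + 15 * \<eta> + 2 / real N) \<le> 5 * x ^ 4"
    using x by (intro real_le_lsqrt) auto
  then have "3 * \<theta> + 69 * \<eta> + 6 / real N + 6 * sqrt (\<theta> + 15 * \<eta> + 2 / real N) \<le> (4 * x) ^ 4"
    using \<theta> \<eta> N powers by (simp add: divide_inverse power_mult_distrib)
  then have "root 4 (3 * \<theta> + 69 * \<eta> + 6 / real N + 6 * sqrt (\<theta> + 15 * \<eta> + 2 / real N))
      \<le> root 4 ((4 * x) ^ 4)"
    by (subst real_root_le_iff) auto
  also have "\<dots> = 4 * x"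
    by (rule real_root_power_cancel) (use x in auto)
  finally show ?thesis
    using \<eta> powers by simp
qed

lemma power_eight_le_div:
  fixes u :: real and n q :: nat
  assumes "0 < q" "real q \<le> u" "2 \<le> u" "u ^ 16 \<le> real n"
  shows "u ^ 8 \<le> real (n div q)"
proof -
  have "n < (n div q + 1) * q"
    using dividend_less_div_times[of q n] assms(1) by (simp add: algebra_simps)
  then have "real n < (real (n div q) + 1) * real q"
    by (metis of_nat_add of_nat_less_iff of_nat_mult of_nat_1)
  moreover have "u ^ 15 * real q \<le> real n"
  proof -
    have "u ^ 15 * real q \<le> u ^ 15 * u"
      using assms(2,3) by (intro mult_left_mono) auto
    then show ?thesis
      using assms(4) by (simp add: power_Suc2[symmetric])
  qed
  ultimately have "u ^ 15 < real (n div q) + 1"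
    using assms(1) by (smt (verit) mult_le_cancel_right of_nat_0_less_iff)
  moreover have "u ^ 8 + 1 \<le> u ^ 15"
  proof -
    have "1 \<le> u ^ 8" "2 \<le> u ^ 7"
      using assms(3) by (auto intro: one_le_power order.trans[OF _ power_increasing[of 1 7 u]])
    then have "u ^ 8 * 2 \<le> u ^ 8 * u ^ 7"
      by (intro mult_left_mono) auto
    then show ?thesis
      using \<open>1 \<le> u ^ 8\<close> by (simp add: power_add[symmetric])
  qed
  ultimately show ?thesis by linarith
qed

lemma inverse_div_le_power_eight:
  fixes x :: real and n q :: nat
  assumes x: "0 < x" "x \<le> 1 / 2" and q: "0 < q" "real q * x \<le> 1" and n: "0 < n" "1 / real n \<le> x ^ 16"
  shows "0 < n div q" "1 / real (n div q) \<le> x ^ 8"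
proof -
  have "2 \<le> 1 / x" "real q \<le> 1 / x" "(1 / x) ^ 16 \<le> real n"
    using x q n by (simp_all add: field_simps power_one_over)
  then have div: "(1 / x) ^ 8 \<le> real (n div q)"
    using q(1) by (intro power_eight_le_div)
  moreover have "0 < (1 / x) ^ 8"
    using x by simp
  ultimately have "0 < real (n div q)"
    by linarith
  then show "0 < n div q"
    by simp
  have "1 / real (n div q) \<le> 1 / (1 / x) ^ 8"
    using div \<open>0 < (1 / x) ^ 8\<close> \<open>0 < real (n div q)\<close> by (intro divide_left_mono mult_pos_pos) auto
  then show "1 / real (n div q) \<le> x ^ 8"
    by (simp add: power_one_over)
qed

lemma powr_le_imp_le_power:
  fixes t x :: real
  assumes "0 \<le> t" "t powr (1 / real k) \<le> x" "0 < k"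
  shows "t \<le> x ^ k"
proof (cases "t = 0")
  case False
  then have "(t powr (1 / real k)) ^ k \<le> x ^ k"
    using assms by (intro power_mono) auto
  then show ?thesis
    using assms False by (simp add: powr_power)
qed (use assms in simp)

context box_spreadable_array
begin

lemma remove_edge_le_small:
  assumes G: "G \<subseteq> pairs {1..n}" "e \<in> G"
    and x: "0 < x" "400 * real (card G) * x \<le> 1"
    and small: "\<theta> \<le> x ^ 16" "\<eta> \<le> x ^ 16" "1 / real n \<le> x ^ 16"
  shows "\<bar>expectation (\<lambda>\<omega>. \<Prod>s\<in>G. X s \<omega>) - edge_density * expectation (\<lambda>\<omega>. \<Prod>s\<in>G - {e}. X s \<omega>)\<bar>
    \<le> 6 * x"
proof -
  obtain a b where ab: "a < b" "e = {a, b}" "b \<in> {1..n}"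
    using G by (meson pairsE subsetD)
  define q where "q = card (\<Union>G) + 1"
  have "1 \<le> card G"
    using G finite_subset[OF G(1) finite_pairs] by (auto simp: Suc_le_eq card_gt_0_iff)
  then have "real q * x \<le> 3 * real (card G) * x" "1 * x \<le> real (card G) * x"
    using card_Union_pairs_le[OF G(1)] x(1) unfolding q_def by (intro mult_right_mono; simp)+
  then have "x \<le> 1 / 2" "real q * x \<le> 1"
    using x(2) by linarith+
  moreover have "0 < q" "0 < n"
    using ab(3) unfolding q_def by auto
  ultimately have "0 < n div q" "1 / real (n div q) \<le> x ^ 8"
    using inverse_div_le_power_eight x(1) small(3) by blast+
  moreover have "n div q * (card (\<Union>G) + 1) \<le> n"
    unfolding q_def by (rule div_times_less_eq_dividend)
  ultimately interpret edge_removal M X n \<eta> \<theta> G a b "n div q"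
    by unfold_locales (use G ab(1,2) in simp_all)
  have "\<bar>expectation (\<lambda>\<omega>. \<Prod>s\<in>G. X s \<omega>) - edge_density * expectation (\<lambda>\<omega>. \<Prod>s\<in>G - {e}. X s \<omega>)\<bar>
      \<le> 2 * \<eta> + root 4 (3 * \<theta> + 69 * \<eta> + 6 / real (n div q) + 6 * sqrt (\<theta> + 15 * \<eta> + 2 / real (n div q)))"
    using remove_edge_le ab(2) by simp
  also have "\<dots> \<le> 6 * x"
    using \<open>x \<le> 1 / 2\<close> x(1) small eta_range theta_nonneg \<open>1 / real (n div q) \<le> x ^ 8\<close>
    by (intro edge_error_le) simp_all
  finally show ?thesis .
qed

lemma prod_expectation_close_small:
  assumes F: "F \<subseteq> pairs {1..n}" "F \<noteq> {}"
    and x: "0 < x" "400 * real (card F) * x \<le> 1"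
    and small: "\<theta> \<le> x ^ 16" "\<eta> \<le> x ^ 16" "1 / real n \<le> x ^ 16"
  shows "\<bar>expectation (\<lambda>\<omega>. \<Prod>s\<in>F. X s \<omega>) - (\<Prod>s\<in>F. expectation (X s))\<bar> \<le> 7 * real (card F) * x"
proof -
  let ?p = edge_density
  have "finite F"
    using F(1) finite_pairs finite_subset by blast
  obtain a b where "a < b" "a \<in> {1..n}" "b \<in> {1..n}"
    using F by (meson all_not_in_conv pairsE subsetD)
  then have p: "0 \<le> ?p" "?p \<le> 1"
    using edge_density_range by auto
  have "\<bar>expectation (\<lambda>\<omega>. \<Prod>s\<in>F. X s \<omega>) - ?p ^ card F\<bar> \<le> real (card F) * (6 * x)"
  proof (rule telescoping_product_bound[OF \<open>finite F\<close> _ p])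
    show "expectation (\<lambda>\<omega>. \<Prod>s\<in>{}. X s \<omega>) = 1"
      by (simp add: prob_space)
    fix G e assume "G \<subseteq> F" "e \<in> G"
    then have "400 * real (card G) * x \<le> 400 * real (card F) * x"
      using \<open>finite F\<close> x(1) by (intro mult_right_mono) (auto intro: card_mono)
    then have "400 * real (card G) * x \<le> 1"
      using x(2) by linarith
    then show "\<bar>expectation (\<lambda>\<omega>. \<Prod>s\<in>G. X s \<omega>) - ?p * expectation (\<lambda>\<omega>. \<Prod>s\<in>G - {e}. X s \<omega>)\<bar>
        \<le> 6 * x"
      using \<open>G \<subseteq> F\<close> \<open>e \<in> G\<close> F(1) x(1) small by (intro remove_edge_le_small) auto
  qed
  moreover have "\<bar>(\<Prod>s\<in>F. expectation (X s)) - ?p ^ card F\<bar> \<le> real (card F) * \<eta>"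
    using F(1) p expectation_X_range expectation_X_close by (intro prod_dist_power_le) auto
  moreover have "\<eta> \<le> x"
  proof -
    have "1 * x \<le> real (card F) * x"
      using \<open>finite F\<close> F(2) x(1) by (intro mult_right_mono) (auto simp: Suc_le_eq card_gt_0_iff)
    then have "x \<le> 1"
      using x(2) by linarith
    then show ?thesis
      using small(2) power_decreasing[of 1 16 x] x(1) by simp
  qed
  then have "real (card F) * \<eta> \<le> real (card F) * x"
    by (simp add: mult_left_mono)
  moreover have "real (card F) * (6 * x) + real (card F) * x = 7 * real (card F) * x"
    by (simp add: algebra_simps)
  ultimately show ?thesis
    unfolding abs_le_iff by linarith
qed

theorem prod_expectation_close:
  assumes F: "F \<subseteq> pairs {1..n}" "F \<noteq> {}"
  shows "\<bar>expectation (\<lambda>\<omega>. \<Prod>s\<in>F. X s \<omega>) - (\<Prod>s\<in>F. expectation (X s))\<bar>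
    \<le> 400 * real (card F) * (real n powr (-1/16) + \<eta> powr (1/16) + \<theta> powr (1/16))"
proof -
  define x where "x = real n powr (-1/16) + \<eta> powr (1/16) + \<theta> powr (1/16)"
  obtain a b where "a < b" "b \<in> {1..n}"
    using F by (meson all_not_in_conv pairsE subsetD)
  then have "0 < real n powr (-1/16)"
    by simp
  then have "0 < x"
    unfolding x_def by (simp add: add_pos_nonneg)
  have small: "\<theta> \<le> x ^ 16" "\<eta> \<le> x ^ 16" "1 / real n \<le> x ^ 16"
    unfolding x_def using eta_range theta_nonneg
    by (intro powr_le_imp_le_power; simp add: powr_divide powr_minus_divide)+
  show ?thesis
  proof (cases "400 * real (card F) * x \<le> 1")
    case True
    have "7 * real (card F) * x \<le> 400 * real (card F) * x"
      using \<open>0 < x\<close> by (intro mult_right_mono) auto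
    then show ?thesis
      using prod_expectation_close_small[OF F \<open>0 < x\<close> True small] unfolding x_def by linarith
  next
    case False
    then show ?thesis
      using abs_prod_expectation_diff_le_1[OF F(1)] unfolding x_def by linarith
  qed
qed

end

theorem theorem1p5:
  fixes M :: "'a measure" and X :: "nat set \<Rightarrow> 'a \<Rightarrow> real"
    and n :: nat and \<eta> \<theta> :: real
  assumes "prob_space M"
    and "n \<ge> 4"
    and "0 < \<eta>" "\<eta> \<le> 1" "0 < \<theta>" "\<theta> \<le> 1"
    and meas: "\<And>s. s \<in> pairs {1..n} \<Longrightarrow> X s \<in> borel_measurable M"
    and bin: "\<And>s \<omega>. s \<in> pairs {1..n} \<Longrightarrow> \<omega> \<in> space M \<Longrightarrow> X s \<omega> \<in> {0, 1}"
    and spr: "spreadable M n \<eta> X"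
    and box: "\<And>i j k l. 1 \<le> i \<Longrightarrow> i < j \<Longrightarrow> j < k \<Longrightarrow> k < l \<Longrightarrow> l \<le> n \<Longrightarrow>
       (\<integral>\<omega>. X {i,k} \<omega> * X {i,l} \<omega> * X {j,k} \<omega> * X {j,l} \<omega> \<partial>M)
         \<le> (\<integral>\<omega>. X {i,k} \<omega> \<partial>M) * (\<integral>\<omega>. X {i,l} \<omega> \<partial>M)
            * (\<integral>\<omega>. X {j,k} \<omega> \<partial>M) * (\<integral>\<omega>. X {j,l} \<omega> \<partial>M) + \<theta>"
  shows "\<forall>F. F \<subseteq> pairs {1..n} \<longrightarrow> F \<noteq> {} \<longrightarrow> real (card (\<Union>F)) \<le> real n / 2 \<longrightarrow>
     \<bar>(\<integral>\<omega>. (\<Prod>s\<in>F. X s \<omega>) \<partial>M) - (\<Prod>s\<in>F. \<integral>\<omega>. X s \<omega> \<partial>M)\<bar>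
       \<le> 400 * real (card F) * (real n powr (-1/16) + \<eta> powr (1/16) + \<theta> powr (1/16))"
proof -
  interpret box_spreadable_array M X n \<eta> \<theta>
    using assms
    by (intro box_spreadable_array.intro spreadable_binary_array.intro
        spreadable_binary_array_axioms.intro box_spreadable_array_axioms.intro) simp_all
  show ?thesis
    using prod_expectation_close by blast
qed

end
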